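(* Let $f:M^{3}\to\mathbb{S}^{4}$ be a minimal isometric immersion of a 3-dimensional Riemannian manifold with Gauss–Kronecker curvature identically zero and nowhere vanishing second fundamental form, so that its principal curvatures are $\lambda>0>-\lambda$ with $\lambda$ a smooth positive function. Let $(e_1,e_2,e_3)$ be a local orthonormal frame of principal directions corresponding to $\lambda,0,-\lambda$, and define $u:=\langle\nabla_{e_3}e_1,e_2\rangle$ and $v:=e_2(\log\lambda)$, where $\nabla$ is the Levi-Civita connection of $M^3$. Then: (i) the function $u/\lambda^{2}$ is constant along the integral curves of $e_2$; (ii) the functions $u$ and $v$ are harmonic, i.e. $\Delta u=\Delta v=0$, where $\Delta$ is the Laplace–Beltrami operator of $M^3$.
   Context: The Gauss–Kronecker curvature of a hypersurface is the product of its principal curvatures (with respect to a local unit normal). Since $f$ is minimal with $K=0$ and nonzero second fundamental form, the principal curvatures are $\lambda,0,-\lambda$ with $\lambda>0$. *)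

theory Defs
  imports "HOL-Analysis.Analysis"
begin

text \<open>Local coordinate model: the 3-manifold is represented by an open coordinate
  domain U in real^3; the immersion f maps into real^5 with image in the unit
  sphere S^4.  All Riemannian notions on M are those of the induced metric.\<close>

definition pd :: "'n::finite \<Rightarrow> (real^'n \<Rightarrow> 'b::real_normed_vector) \<Rightarrow> real^'n \<Rightarrow> 'b" where
  "pd i h p = frechet_derivative h (at p) (axis i 1)"

definition dird :: "(real^'n::finite \<Rightarrow> 'b::real_normed_vector) \<Rightarrow> (real^'n \<Rightarrow> real^'n) \<Rightarrow> real^'n \<Rightarrow> 'b" where
  "dird h X p = frechet_derivative h (at p) (X p)"

fun Ck :: "nat \<Rightarrow> (real^'n::finite \<Rightarrow> 'b::real_normed_vector) \<Rightarrow> (real^'n) set \<Rightarrow> bool" where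
  "Ck 0 h U = continuous_on U h"
| "Ck (Suc k) h U = (h differentiable_on U \<and> (\<forall>i. Ck k (pd i h) U))"

definition smooth_on :: "(real^'n::finite \<Rightarrow> 'b::real_normed_vector) \<Rightarrow> (real^'n) set \<Rightarrow> bool" where
  "smooth_on h U = (\<forall>k. Ck k h U)"

definition metric :: "(real^'n::finite \<Rightarrow> 'm::real_inner) \<Rightarrow> real^'n \<Rightarrow> real^'n^'n" where
  "metric f p = (\<chi> i j. inner (pd i f p) (pd j f p))"

definition ginner :: "(real^'n::finite \<Rightarrow> 'm::real_inner) \<Rightarrow> real^'n \<Rightarrow> real^'n \<Rightarrow> real^'n \<Rightarrow> real" where
  "ginner f p X Y = (\<Sum>i\<in>UNIV. \<Sum>j\<in>UNIV. metric f p $ i $ j * X $ i * Y $ j)"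

definition christoffel :: "(real^'n::finite \<Rightarrow> 'm::real_inner) \<Rightarrow> 'n \<Rightarrow> 'n \<Rightarrow> 'n \<Rightarrow> real^'n \<Rightarrow> real" where
  "christoffel f k i j p = (1/2) * (\<Sum>l\<in>UNIV. matrix_inv (metric f p) $ k $ l *
      (pd i (\<lambda>q. metric f q $ j $ l) p + pd j (\<lambda>q. metric f q $ i $ l) p
       - pd l (\<lambda>q. metric f q $ i $ j) p))"

definition covd :: "(real^'n::finite \<Rightarrow> 'm::real_inner) \<Rightarrow> (real^'n \<Rightarrow> real^'n) \<Rightarrow> (real^'n \<Rightarrow> real^'n) \<Rightarrow> real^'n \<Rightarrow> real^'n" where
  "covd f X Y p = (\<chi> k. dird (\<lambda>q. Y q $ k) X p
      + (\<Sum>i\<in>UNIV. \<Sum>j\<in>UNIV. christoffel f k i j p * X p $ i * Y p $ j))"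

definition laplace_beltrami :: "(real^'n::finite \<Rightarrow> 'm::real_inner) \<Rightarrow> (real^'n \<Rightarrow> real) \<Rightarrow> real^'n \<Rightarrow> real" where
  "laplace_beltrami f \<phi> p = (1 / sqrt (det (metric f p))) *
     (\<Sum>i\<in>UNIV. pd i (\<lambda>q. sqrt (det (metric f q)) *
        (\<Sum>j\<in>UNIV. matrix_inv (metric f q) $ i $ j * pd j \<phi> q)) p)"

end

theory Submission
  imports Defs
begin

text \<open>
  Along \<open>f\<close> use the orthonormal moving frame \<open>F\<^sub>0 = f\<close>, \<open>F\<^sub>k = df(e\<^sub>k)\<close>, \<open>F\<^sub>4 = N\<close> of \<open>\<real>\<^sup>5\<close>
  and its connection forms \<open>\<omega>\<^sub>A\<^sub>B(e\<^sub>k) = \<langle>e\<^sub>k F\<^sub>A, F\<^sub>B\<rangle>\<close>, so that \<open>u = \<omega>\<^sub>1\<^sub>2(e\<^sub>3)\<close>. Since \<open>\<real>\<^sup>5\<close>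
  is flat, commuting \<open>e\<^sub>k\<close> and \<open>e\<^sub>l\<close> on \<open>F\<^sub>A\<close> gives the structure equations. Those with
  \<open>A = 4\<close> (Codazzi) express the other connection forms \<open>\<omega>\<^sub>1\<^sub>2, \<omega>\<^sub>2\<^sub>3\<close> through \<open>u\<close> and \<open>\<omega>\<^sub>1\<^sub>2(e\<^sub>1)\<close>, and give
  \<open>e\<^sub>2 \<lambda> = \<lambda> \<omega>\<^sub>1\<^sub>2(e\<^sub>1)\<close>, i.e. \<open>v = \<omega>\<^sub>1\<^sub>2(e\<^sub>1)\<close>. The remaining ones (Gauss) then read
  \<open>e\<^sub>2 u = 2uv\<close>, \<open>e\<^sub>2 v = 1 + v\<^sup>2 - u\<^sup>2\<close>, \<open>e\<^sub>1 v = -e\<^sub>3 u\<close>, \<open>e\<^sub>3 v = e\<^sub>1 u\<close>.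

  The first of these together with \<open>e\<^sub>2 \<lambda> = \<lambda> v\<close> gives \<open>e\<^sub>2 (u/\<lambda>\<^sup>2) = 0\<close>, which is (i).
  For (ii) write \<open>\<Delta>\<phi> = \<Sum>\<^sub>b (e\<^sub>b e\<^sub>b \<phi> + (div e\<^sub>b) e\<^sub>b \<phi>)\<close>. By the last two equations the
  \<open>e\<^sub>1\<close>- and \<open>e\<^sub>3\<close>-second derivatives of \<open>u\<close> (of \<open>v\<close>) combine into the first order expression
  \<open>[e\<^sub>1, e\<^sub>3] v\<close> (\<open>-[e\<^sub>1, e\<^sub>3] u\<close>), and after substituting the first two equations everything cancels.
\<close>

lemma frechet_derivative_cong_open:
  assumes "open U" "p \<in> U" "\<And>q. q \<in> U \<Longrightarrow> h q = h' q"
  shows "frechet_derivative h (at p) = frechet_derivative h' (at p)"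
proof -
  have "\<And>D. (h has_derivative D) (at p) \<longleftrightarrow> (h' has_derivative D) (at p)"
    using has_derivative_transform_within_open[OF _ assms(1,2)] assms(3) by metis
  then show ?thesis unfolding frechet_derivative_def by simp
qed

lemma pd_cong_open:
  assumes "open U" "p \<in> U" "\<And>q. q \<in> U \<Longrightarrow> h q = h' q"
  shows "pd i h p = pd i h' p"
  unfolding pd_def using frechet_derivative_cong_open[OF assms] by simp

lemma dird_cong_open:
  assumes "open U" "p \<in> U" "\<And>q. q \<in> U \<Longrightarrow> h q = h' q"
  shows "dird h X p = dird h' X p"
  unfolding dird_def using frechet_derivative_cong_open[OF assms] by simp

lemma pd_of_has_derivative: "(h has_derivative D) (at p) \<Longrightarrow> pd i h p = D (axis i 1)"
  unfolding pd_def using frechet_derivative_at by metis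

lemma dird_of_has_derivative: "(h has_derivative D) (at p) \<Longrightarrow> dird h X p = D (X p)"
  unfolding dird_def using frechet_derivative_at by metis

lemma frechet_derivative_eq_sum_pd:
  fixes h :: "real^'n::finite \<Rightarrow> 'b::real_normed_vector"
  assumes "h differentiable (at p)"
  shows "frechet_derivative h (at p) w = (\<Sum>i\<in>UNIV. (w $ i) *\<^sub>R pd i h p)"
proof -
  have lin: "linear (frechet_derivative h (at p))"
    using linear_frechet_derivative[OF assms] .
  have "w = (\<Sum>i\<in>UNIV. (w $ i) *\<^sub>R axis i 1)"
    using basis_expansion[of w] by (simp add: scalar_mult_eq_scaleR)
  then have "frechet_derivative h (at p) w
      = frechet_derivative h (at p) (\<Sum>i\<in>UNIV. (w $ i) *\<^sub>R axis i 1)"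
    by simp
  also have "\<dots> = (\<Sum>i\<in>UNIV. (w $ i) *\<^sub>R frechet_derivative h (at p) (axis i 1))"
    using lin by (simp add: linear_sum linear_scale)
  finally show ?thesis unfolding pd_def .
qed

lemma dird_eq_sum_pd:
  fixes h :: "real^'n::finite \<Rightarrow> 'b::real_normed_vector"
  assumes "h differentiable (at p)"
  shows "dird h X p = (\<Sum>i\<in>UNIV. (X p $ i) *\<^sub>R pd i h p)"
  unfolding dird_def using frechet_derivative_eq_sum_pd[OF assms] .

lemma dird_eq_sum_pd_real:
  fixes h :: "real^'n::finite \<Rightarrow> real"
  assumes "h differentiable (at p)"
  shows "dird h X p = (\<Sum>i\<in>UNIV. X p $ i * pd i h p)"
  using dird_eq_sum_pd[OF assms] by simp

lemma dird_sum_scaleR_fields: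
  fixes F :: "real^'n::finite \<Rightarrow> 'b::real_normed_vector"
  assumes "F differentiable (at p)"
  shows "dird F (\<lambda>q. \<Sum>m\<in>S. c m *\<^sub>R Y m q) p = (\<Sum>m\<in>S. c m *\<^sub>R dird F (Y m) p)"
proof -
  have l: "linear (frechet_derivative F (at p))" using linear_frechet_derivative[OF assms] .
  show ?thesis unfolding dird_def linear_sum[OF l] linear_scale[OF l] ..
qed

lemma dird_const_on:
  assumes "open U" "p \<in> U" "\<And>q. q \<in> U \<Longrightarrow> h q = c"
  shows "dird h X p = 0"
proof -
  have "dird h X p = dird (\<lambda>q. c) X p" by (rule dird_cong_open[OF assms(1,2)]) (rule assms(3))
  also have "\<dots> = 0" by (simp add: dird_of_has_derivative[OF has_derivative_const])
  finally show ?thesis .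
qed

lemma pd_linear:
  assumes L: "bounded_linear L" and "h differentiable (at p)"
  shows "pd i (\<lambda>q. L (h q)) p = L (pd i h p)"
  using pd_of_has_derivative[OF bounded_linear.has_derivative[OF L frechet_derivative_works[THEN iffD1, OF assms(2)]], of i]
  by (simp add: pd_def)

lemma dird_linear:
  assumes L: "bounded_linear L" and "h differentiable (at p)"
  shows "dird (\<lambda>q. L (h q)) X p = L (dird h X p)"
  using dird_of_has_derivative[OF bounded_linear.has_derivative[OF L frechet_derivative_works[THEN iffD1, OF assms(2)]], of X]
  by (simp add: dird_def)

lemma dird_eq_minus_on:
  fixes h :: "real^'n::finite \<Rightarrow> 'b::real_normed_vector"
  assumes "open U" "p \<in> U" "\<And>q. q \<in> U \<Longrightarrow> g q = - h q" "h differentiable (at p)"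
  shows "dird g X p = - dird h X p"
proof -
  have "dird g X p = dird (\<lambda>q. - h q) X p" by (rule dird_cong_open[OF assms(1,2)]) (rule assms(3))
  also have "\<dots> = - dird h X p"
    using dird_linear[OF bounded_linear_minus[OF bounded_linear_ident] assms(4)] by simp
  finally show ?thesis .
qed

lemma pd_vec_nth:
  fixes h :: "real^'n::finite \<Rightarrow> real^'m::finite"
  shows "h differentiable (at p) \<Longrightarrow> pd i (\<lambda>q. h q $ c) p = pd i h p $ c"
  using pd_linear[OF bounded_linear_vec_nth] by blast

lemma dird_vec_nth:
  fixes h :: "real^'n::finite \<Rightarrow> real^'m::finite"
  shows "h differentiable (at p) \<Longrightarrow> dird (\<lambda>q. h q $ c) X p = dird h X p $ c"
  using dird_linear[OF bounded_linear_vec_nth] by blast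

lemma pd_add:
  assumes "h differentiable (at p)" "g differentiable (at p)"
  shows "pd i (\<lambda>q. h q + g q) p = pd i h p + pd i g p"
  using pd_of_has_derivative[OF has_derivative_add[OF assms[unfolded frechet_derivative_works]], of i]
  by (simp add: pd_def)

lemma dird_add:
  assumes "h differentiable (at p)" "g differentiable (at p)"
  shows "dird (\<lambda>q. h q + g q) X p = dird h X p + dird g X p"
  using dird_of_has_derivative[OF has_derivative_add[OF assms[unfolded frechet_derivative_works]], of X]
  by (simp add: dird_def)

lemma pd_diff:
  assumes "h differentiable (at p)" "g differentiable (at p)"
  shows "pd i (\<lambda>q. h q - g q) p = pd i h p - pd i g p"
  using pd_of_has_derivative[OF has_derivative_diff[OF assms[unfolded frechet_derivative_works]], of i]
  by (simp add: pd_def)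

lemma dird_diff:
  assumes "h differentiable (at p)" "g differentiable (at p)"
  shows "dird (\<lambda>q. h q - g q) X p = dird h X p - dird g X p"
  using dird_of_has_derivative[OF has_derivative_diff[OF assms[unfolded frechet_derivative_works]], of X]
  by (simp add: dird_def)

lemma pd_sum:
  assumes "\<And>a. a \<in> S \<Longrightarrow> h a differentiable (at p)"
  shows "pd i (\<lambda>q. \<Sum>a\<in>S. h a q) p = (\<Sum>a\<in>S. pd i (h a) p)"
proof -
  have "((\<lambda>q. \<Sum>a\<in>S. h a q) has_derivative (\<lambda>w. \<Sum>a\<in>S. frechet_derivative (h a) (at p) w)) (at p)"
    using assms frechet_derivative_works by (intro has_derivative_sum) blast
  from pd_of_has_derivative[OF this, of i] show ?thesis by (simp add: pd_def)
qed

lemma dird_sum: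
  assumes "\<And>a. a \<in> S \<Longrightarrow> h a differentiable (at p)"
  shows "dird (\<lambda>q. \<Sum>a\<in>S. h a q) X p = (\<Sum>a\<in>S. dird (h a) X p)"
proof -
  have "((\<lambda>q. \<Sum>a\<in>S. h a q) has_derivative (\<lambda>w. \<Sum>a\<in>S. frechet_derivative (h a) (at p) w)) (at p)"
    using assms frechet_derivative_works by (intro has_derivative_sum) blast
  from dird_of_has_derivative[OF this] show ?thesis by (simp add: dird_def)
qed

lemma pd_bilinear:
  assumes B: "bounded_bilinear bop" and "h differentiable (at p)" "g differentiable (at p)"
  shows "pd i (\<lambda>q. bop (h q) (g q)) p = bop (h p) (pd i g p) + bop (pd i h p) (g p)"
  using pd_of_has_derivative[OF bounded_bilinear.FDERIV[OF B assms(2,3)[unfolded frechet_derivative_works]], of i]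
  by (simp add: pd_def)

lemma dird_bilinear:
  assumes B: "bounded_bilinear bop" and "h differentiable (at p)" "g differentiable (at p)"
  shows "dird (\<lambda>q. bop (h q) (g q)) X p = bop (h p) (dird g X p) + bop (dird h X p) (g p)"
  using dird_of_has_derivative[OF bounded_bilinear.FDERIV[OF B assms(2,3)[unfolded frechet_derivative_works]], of X]
  by (simp add: dird_def)

lemma pd_mult:
  fixes h g :: "real^'n::finite \<Rightarrow> real"
  assumes "h differentiable (at p)" "g differentiable (at p)"
  shows "pd i (\<lambda>q. h q * g q) p = h p * pd i g p + pd i h p * g p"
  using pd_bilinear[OF bounded_bilinear_mult assms] .

lemma dird_mult:
  fixes h g :: "real^'n::finite \<Rightarrow> real"
  assumes "h differentiable (at p)" "g differentiable (at p)"
  shows "dird (\<lambda>q. h q * g q) X p = h p * dird g X p + dird h X p * g p"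
  using dird_bilinear[OF bounded_bilinear_mult assms] .

lemma has_derivative_sqrt:
  fixes G :: "real^'n::finite \<Rightarrow> real"
  assumes "G differentiable (at p)" "G p > 0"
  shows "((\<lambda>q. sqrt (G q)) has_derivative
           (\<lambda>w. inverse (sqrt (G p)) / 2 * frechet_derivative G (at p) w)) (at p)"
  using has_derivative_compose[OF assms(1)[unfolded frechet_derivative_works]
      DERIV_real_sqrt[OF assms(2), unfolded has_field_derivative_def]]
  by (simp add: mult.commute)

lemma pd_sqrt:
  fixes G :: "real^'n::finite \<Rightarrow> real"
  assumes "G differentiable (at p)" "G p > 0"
  shows "pd i (\<lambda>q. sqrt (G q)) p = pd i G p / (2 * sqrt (G p))"
  using pd_of_has_derivative[OF has_derivative_sqrt[OF assms], of i] assms(2)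
  by (simp add: pd_def divide_simps mult.commute)

lemma constant_along_integral_curve:
  fixes \<rho> :: "real^'n::finite \<Rightarrow> real"
  assumes I: "is_interval I" and \<gamma>U: "\<gamma> ` I \<subseteq> U"
    and \<gamma>': "\<And>t. t \<in> I \<Longrightarrow> (\<gamma> has_vector_derivative X (\<gamma> t)) (at t within I)"
    and \<rho>d: "\<And>q. q \<in> U \<Longrightarrow> \<rho> differentiable (at q)"
    and \<rho>X: "\<And>q. q \<in> U \<Longrightarrow> dird \<rho> X q = 0"
    and s: "s \<in> I" and t: "t \<in> I"
  shows "\<rho> (\<gamma> s) = \<rho> (\<gamma> t)"
proof -
  have "((\<lambda>x. \<rho> (\<gamma> x)) has_derivative (\<lambda>h. 0)) (at x within I)" if x: "x \<in> I" for x
  proof -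
    have \<gamma>x: "\<gamma> x \<in> U" using \<gamma>U x by auto
    have "(\<gamma> has_derivative (\<lambda>h. h *\<^sub>R X (\<gamma> x))) (at x within I)"
      using \<gamma>'[OF x] unfolding has_vector_derivative_def .
    from has_derivative_compose[OF this \<rho>d[OF \<gamma>x, unfolded frechet_derivative_works]]
    show ?thesis
      using \<rho>X[OF \<gamma>x] linear_frechet_derivative[OF \<rho>d[OF \<gamma>x]]
      by (simp add: dird_def linear_scale)
  qed
  then obtain c where "\<forall>x\<in>I. \<rho> (\<gamma> x) = c"
    using has_derivative_zero_constant[OF is_interval_convex[OF I]] by blast
  then show ?thesis using s t by simp
qed

lemma Ck_differentiable_at: "Ck (Suc k) h U \<Longrightarrow> open U \<Longrightarrow> p \<in> U \<Longrightarrow> h differentiable (at p)"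
  by (simp add: differentiable_on_eq_differentiable_at)

lemma Ck_Suc_pd: "Ck (Suc k) h U \<Longrightarrow> Ck k (pd i h) U"
  by simp

lemma Ck_Suc_imp_Ck: "Ck (Suc k) h U \<Longrightarrow> Ck k h U"
proof (induction k arbitrary: h)
  case 0
  then show ?case by (simp add: differentiable_imp_continuous_on)
next
  case (Suc k)
  then show ?case by (metis Ck.simps(2))
qed

lemma Ck_cong_open:
  assumes "open U" "Ck k h U" "\<And>q. q \<in> U \<Longrightarrow> h q = h' q"
  shows "Ck k h' U"
  using assms
proof (induction k arbitrary: h h')
  case 0
  then show ?case using continuous_on_cong by (metis Ck.simps(1))
next
  case (Suc k)
  have "h' differentiable (at x)" if x: "x \<in> U" for x
  proof -
    obtain D where "(h has_derivative D) (at x)"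
      using Ck_differentiable_at[OF Suc.prems(2,1) x] unfolding differentiable_def by blast
    then have "(h' has_derivative D) (at x)"
      using has_derivative_transform_within_open[OF _ Suc.prems(1) x] Suc.prems(3) by blast
    then show ?thesis unfolding differentiable_def by blast
  qed
  moreover have "Ck k (pd i h') U" for i
    using Suc.IH[of "pd i h" "pd i h'"] Suc.prems pd_cong_open[of U _ h h' i] by auto
  ultimately show ?case using Suc.prems(1) by (simp add: differentiable_on_eq_differentiable_at)
qed

lemma Ck_const:
  fixes U :: "(real^'n::finite) set"
  shows "Ck k (\<lambda>q. c) U"
proof (induction k arbitrary: c)
  case 0 then show ?case by simp
next
  case (Suc k)
  have "pd i (\<lambda>q::real^'n. c) = (\<lambda>q. 0)" for i
    by (rule ext) (simp add: pd_of_has_derivative[OF has_derivative_const])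
  then show ?case using Suc by simp
qed

lemma Ck_linear:
  assumes L: "bounded_linear L" and "open U" and "Ck k h U"
  shows "Ck k (\<lambda>q. L (h q)) U"
  using assms(2,3)
proof (induction k arbitrary: h)
  case 0
  then show ?case using L by (simp add: bounded_linear.continuous_on)
next
  case (Suc k)
  have hd: "\<And>p. p \<in> U \<Longrightarrow> h differentiable (at p)" using Suc.prems Ck_differentiable_at by blast
  have "(\<lambda>q. L (h q)) differentiable_on U"
    using bounded_linear.has_derivative[OF L hd[unfolded frechet_derivative_works]] Suc.prems(1)
    unfolding differentiable_on_eq_differentiable_at[OF Suc.prems(1)] differentiable_def by blast
  moreover have "Ck k (pd i (\<lambda>q. L (h q))) U" for i
  proof (rule Ck_cong_open[OF Suc.prems(1)])
    show "Ck k (\<lambda>q. L (pd i h q)) U" using Suc by simp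
    show "L (pd i h q) = pd i (\<lambda>q. L (h q)) q" if "q \<in> U" for q
      using pd_linear[OF L hd[OF that]] by simp
  qed
  ultimately show ?case by simp
qed

lemma Ck_add:
  assumes "open U" and "Ck k h U" and "Ck k g U"
  shows "Ck k (\<lambda>q. h q + g q) U"
  using assms
proof (induction k arbitrary: h g)
  case 0
  then show ?case by (simp add: continuous_on_add)
next
  case (Suc k)
  have hd: "\<And>p. p \<in> U \<Longrightarrow> h differentiable (at p)" "\<And>p. p \<in> U \<Longrightarrow> g differentiable (at p)"
    using Suc.prems Ck_differentiable_at by blast+
  have "(\<lambda>q. h q + g q) differentiable_on U"
    using hd Suc.prems(1) by (simp add: differentiable_on_eq_differentiable_at differentiable_add)
  moreover have "Ck k (pd i (\<lambda>q. h q + g q)) U" for i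
  proof (rule Ck_cong_open[OF Suc.prems(1)])
    show "Ck k (\<lambda>q. pd i h q + pd i g q) U" using Suc by simp
    show "pd i h q + pd i g q = pd i (\<lambda>q. h q + g q) q" if "q \<in> U" for q
      using pd_add[OF hd[OF that]] by simp
  qed
  ultimately show ?case by simp
qed

lemma Ck_sum:
  assumes "open U" "finite S" "\<And>a. a \<in> S \<Longrightarrow> Ck k (h a) U"
  shows "Ck k (\<lambda>q. \<Sum>a\<in>S. h a q) U"
  using assms(2,3)
proof (induction S rule: finite_induct)
  case empty then show ?case using Ck_const[of k 0] by simp
next
  case (insert x F)
  then show ?case by (auto intro!: Ck_add[OF assms(1)])
qed

lemma Ck_bilinear:
  assumes B: "bounded_bilinear bop" and "open U" and "Ck k h U" and "Ck k g U"
  shows "Ck k (\<lambda>q. bop (h q) (g q)) U"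
  using assms(2-4)
proof (induction k arbitrary: h g)
  case 0
  then show ?case by (simp add: bounded_bilinear.continuous_on[OF B])
next
  case (Suc k)
  have hd: "\<And>p. p \<in> U \<Longrightarrow> h differentiable (at p)" "\<And>p. p \<in> U \<Longrightarrow> g differentiable (at p)"
    using Suc.prems Ck_differentiable_at by blast+
  have "(\<lambda>q. bop (h q) (g q)) differentiable_on U"
    using bounded_bilinear.FDERIV[OF B hd[unfolded frechet_derivative_works]]
    unfolding differentiable_on_eq_differentiable_at[OF Suc.prems(1)] differentiable_def by blast
  moreover have "Ck k (pd i (\<lambda>q. bop (h q) (g q))) U" for i
  proof -
    have "Ck k (\<lambda>q. bop (h q) (pd i g q) + bop (pd i h q) (g q)) U"
      using Suc.IH[OF Suc.prems(1) Ck_Suc_imp_Ck[OF Suc.prems(2)] Ck_Suc_pd[OF Suc.prems(3)]]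
        Suc.IH[OF Suc.prems(1) Ck_Suc_pd[OF Suc.prems(2)] Ck_Suc_imp_Ck[OF Suc.prems(3)]]
      by (rule Ck_add[OF Suc.prems(1)])
    then show ?thesis
      by (rule Ck_cong_open[OF Suc.prems(1)]) (use pd_bilinear[OF B hd] in simp)
  qed
  ultimately show ?case by simp
qed

lemma smooth_on_imp_Ck: "smooth_on h U \<Longrightarrow> Ck k h U"
  by (simp add: smooth_on_def)

lemma smooth_on_differentiable_at:
  "smooth_on h U \<Longrightarrow> open U \<Longrightarrow> p \<in> U \<Longrightarrow> h differentiable (at p)"
  using smooth_on_imp_Ck[of h U "Suc 0"] Ck_differentiable_at by blast

lemma smooth_on_pd: "smooth_on h U \<Longrightarrow> smooth_on (pd i h) U"
  unfolding smooth_on_def by (metis Ck_Suc_pd)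

lemma smooth_on_cong_open:
  "open U \<Longrightarrow> smooth_on h U \<Longrightarrow> (\<And>q. q \<in> U \<Longrightarrow> h q = h' q) \<Longrightarrow> smooth_on h' U"
  unfolding smooth_on_def using Ck_cong_open by blast

lemma smooth_on_linear:
  "bounded_linear L \<Longrightarrow> open U \<Longrightarrow> smooth_on h U \<Longrightarrow> smooth_on (\<lambda>q. L (h q)) U"
  unfolding smooth_on_def using Ck_linear by blast

lemma smooth_on_vec_nth: "open U \<Longrightarrow> smooth_on h U \<Longrightarrow> smooth_on (\<lambda>q. (h q :: real^'m) $ c) U"
  using smooth_on_linear[OF bounded_linear_vec_nth] by blast

lemma smooth_on_sum:
  "open U \<Longrightarrow> finite S \<Longrightarrow> (\<And>a. a \<in> S \<Longrightarrow> smooth_on (h a) U) \<Longrightarrow> smooth_on (\<lambda>q. \<Sum>a\<in>S. h a q) U"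
  unfolding smooth_on_def using Ck_sum by blast

lemma smooth_on_bilinear:
  "bounded_bilinear bop \<Longrightarrow> open U \<Longrightarrow> smooth_on h U \<Longrightarrow> smooth_on g U
    \<Longrightarrow> smooth_on (\<lambda>q. bop (h q) (g q)) U"
  unfolding smooth_on_def using Ck_bilinear by blast

lemma smooth_on_scaleR: "open U \<Longrightarrow> smooth_on h U \<Longrightarrow> smooth_on g U \<Longrightarrow> smooth_on (\<lambda>q. h q *\<^sub>R g q) U"
  using smooth_on_bilinear[OF bounded_bilinear_scaleR] by blast

lemma smooth_on_inner:
  "open U \<Longrightarrow> smooth_on h U \<Longrightarrow> smooth_on g U \<Longrightarrow> smooth_on (\<lambda>q. inner (h q) (g q)) U"
  using smooth_on_bilinear[OF bounded_bilinear_inner] by blast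

lemma smooth_on_dird:
  fixes F :: "real^'n::finite \<Rightarrow> 'b::real_normed_vector"
  assumes "open U" "smooth_on F U" "smooth_on X U"
  shows "smooth_on (dird F X) U"
proof -
  have "smooth_on (\<lambda>q. \<Sum>i\<in>UNIV. (X q $ i) *\<^sub>R pd i F q) U"
    by (intro smooth_on_sum smooth_on_scaleR smooth_on_vec_nth smooth_on_pd assms) auto
  then show ?thesis
    by (rule smooth_on_cong_open[OF assms(1)])
      (simp add: dird_eq_sum_pd smooth_on_differentiable_at[OF assms(2,1)])
qed

section \<open>Symmetry of second derivatives\<close>

lemma has_real_derivative_along_line:
  fixes h :: "real^'n::finite \<Rightarrow> real"
  assumes "h differentiable (at (q + x *\<^sub>R v))"
  shows "((\<lambda>t. h (q + t *\<^sub>R v)) has_real_derivative frechet_derivative h (at (q + x *\<^sub>R v)) v) (at x)"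
proof -
  let ?D = "frechet_derivative h (at (q + x *\<^sub>R v))"
  have "((\<lambda>t. q + t *\<^sub>R v) has_derivative (\<lambda>t. t *\<^sub>R v)) (at x)"
    by (auto intro!: derivative_eq_intros)
  from has_derivative_compose[OF this assms[unfolded frechet_derivative_works]]
  have "((\<lambda>t. h (q + t *\<^sub>R v)) has_derivative (\<lambda>t. ?D (t *\<^sub>R v))) (at x)" .
  moreover have "(\<lambda>t. ?D (t *\<^sub>R v)) = (\<lambda>t. ?D v * t)"
    using linear_frechet_derivative[OF assms] by (auto simp: linear_scale)
  ultimately show ?thesis unfolding has_field_derivative_def by simp
qed

lemma mean_value_on_interval:
  fixes \<phi> :: "real \<Rightarrow> real"
  assumes s: "0 < s" and d\<phi>: "\<And>x. 0 \<le> x \<Longrightarrow> x \<le> s \<Longrightarrow> DERIV \<phi> x :> \<phi>' x"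
  shows "\<exists>z. 0 < z \<and> z < s \<and> \<phi> s - \<phi> 0 = s * \<phi>' z"
proof -
  have "\<exists>z\<in>{0<..<s}. \<phi> s - \<phi> 0 = \<phi>' z * (s - 0)"
    by (rule mvt_simple[OF s, of \<phi> "\<lambda>x h. \<phi>' x * h"])
      (use d\<phi> in \<open>auto simp: has_field_derivative_def intro: has_derivative_at_withinI\<close>)
  then show ?thesis by (auto simp: mult.commute)
qed

lemma second_difference_mean_value:
  fixes h :: "real^'n::finite \<Rightarrow> real"
  assumes U: "open U" and C: "Ck 2 h U" and s: "0 < s"
    and square: "\<And>x y. 0 \<le> x \<Longrightarrow> x \<le> s \<Longrightarrow> 0 \<le> y \<Longrightarrow> y \<le> s
                   \<Longrightarrow> p + x *\<^sub>R axis i 1 + y *\<^sub>R axis j 1 \<in> U"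
  shows "\<exists>x y. 0 < x \<and> x < s \<and> 0 < y \<and> y < s \<and>
     h (p + s *\<^sub>R axis i 1 + s *\<^sub>R axis j 1) - h (p + s *\<^sub>R axis i 1) - h (p + s *\<^sub>R axis j 1) + h p
      = s * s * pd j (pd i h) (p + x *\<^sub>R axis i 1 + y *\<^sub>R axis j 1)"
proof -
  define a :: "real^'n" where "a = axis i 1"
  define b :: "real^'n" where "b = axis j 1"
  have hd: "\<And>q. q \<in> U \<Longrightarrow> h differentiable (at q)" and pdd: "\<And>q. q \<in> U \<Longrightarrow> pd i h differentiable (at q)"
    using C[unfolded numeral_2_eq_2] U by (simp_all add: differentiable_on_eq_differentiable_at)
  have inU: "0 \<le> x \<Longrightarrow> x \<le> s \<Longrightarrow> 0 \<le> y \<Longrightarrow> y \<le> s \<Longrightarrow> p + x *\<^sub>R a + y *\<^sub>R b \<in> U" for x y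
    using square unfolding a_def b_def by blast
  have line: "((\<lambda>t. h (q + t *\<^sub>R a)) has_real_derivative pd i h (q + x *\<^sub>R a)) (at x)"
    if "q + x *\<^sub>R a \<in> U" for q x
    using has_real_derivative_along_line[OF hd[OF that]] unfolding pd_def a_def .
  define \<phi> where "\<phi> x = h ((p + s *\<^sub>R b) + x *\<^sub>R a) - h (p + x *\<^sub>R a)" for x
  have d\<phi>: "DERIV \<phi> x :> (pd i h (p + x *\<^sub>R a + s *\<^sub>R b) - pd i h (p + x *\<^sub>R a))"
    if "0 \<le> x" "x \<le> s" for x
  proof -
    have eq: "p + s *\<^sub>R b + x *\<^sub>R a = p + x *\<^sub>R a + s *\<^sub>R b" by (simp add: algebra_simps)
    have m1: "p + s *\<^sub>R b + x *\<^sub>R a \<in> U" unfolding eq using inU[OF that] s by simp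
    have m2: "p + x *\<^sub>R a \<in> U" using inU[OF that, of 0] s by simp
    have "DERIV \<phi> x :> (pd i h (p + s *\<^sub>R b + x *\<^sub>R a) - pd i h (p + x *\<^sub>R a))"
      unfolding \<phi>_def by (rule DERIV_diff[OF line[OF m1] line[OF m2]])
    then show ?thesis unfolding eq .
  qed
  obtain z where z: "0 < z" "z < s"
      "\<phi> s - \<phi> 0 = s * (pd i h (p + z *\<^sub>R a + s *\<^sub>R b) - pd i h (p + z *\<^sub>R a))"
    using mean_value_on_interval[OF s d\<phi>] by blast
  define \<psi> where "\<psi> y = pd i h ((p + z *\<^sub>R a) + y *\<^sub>R b)" for y
  have d\<psi>: "DERIV \<psi> y :> pd j (pd i h) (p + z *\<^sub>R a + y *\<^sub>R b)" if "0 \<le> y" "y \<le> s" for y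
    using has_real_derivative_along_line[of "pd i h" "p + z *\<^sub>R a" y b] pdd[OF inU[of z y]] z that
    unfolding \<psi>_def pd_def[of j] b_def by simp
  obtain w where w: "0 < w" "w < s" "\<psi> s - \<psi> 0 = s * pd j (pd i h) (p + z *\<^sub>R a + w *\<^sub>R b)"
    using mean_value_on_interval[OF s d\<psi>] by blast
  have "h (p + s *\<^sub>R a + s *\<^sub>R b) - h (p + s *\<^sub>R a) - h (p + s *\<^sub>R b) + h p = \<phi> s - \<phi> 0"
    unfolding \<phi>_def by (simp add: algebra_simps)
  also have "\<dots> = s * (\<psi> s - \<psi> 0)" using z(3) unfolding \<psi>_def by simp
  also have "\<dots> = s * s * pd j (pd i h) (p + z *\<^sub>R a + w *\<^sub>R b)" using w(3) by simp
  finally show ?thesis using z w unfolding a_def b_def by blast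
qed

lemma dist_square_corner:
  fixes p :: "real^'n::finite"
  assumes "0 \<le> x" "x \<le> s" "0 \<le> y" "y \<le> s" "0 < s"
  shows "dist (p + x *\<^sub>R axis i 1 + y *\<^sub>R axis j 1) p < 3 * s"
proof -
  have "norm (x *\<^sub>R axis i (1::real) + y *\<^sub>R axis j 1 :: real^'n)
      \<le> norm (x *\<^sub>R axis i (1::real) :: real^'n) + norm (y *\<^sub>R axis j (1::real) :: real^'n)"
    by (rule norm_triangle_ineq)
  also have "\<dots> = x + y" using assms by simp
  finally show ?thesis using assms by (simp add: dist_norm add.assoc)
qed

text \<open>If the two mixed partials differed at \<open>p\<close>, continuity would keep them apart on a small
  square, contradicting the two mean value expressions for its second difference.\<close>

lemma pd_pd_commute_real:
  fixes h :: "real^'n::finite \<Rightarrow> real"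
  assumes U: "open U" and C: "Ck 2 h U" and p: "p \<in> U"
  shows "pd j (pd i h) p = pd i (pd j h) p"
proof (rule ccontr)
  assume "pd j (pd i h) p \<noteq> pd i (pd j h) p"
  then have d: "\<bar>pd j (pd i h) p - pd i (pd j h) p\<bar> > 0" (is "?d > 0") by simp
  obtain r where r: "r > 0" "ball p r \<subseteq> U" using U p openE by blast
  have "isCont (pd j (pd i h)) p" "isCont (pd i (pd j h)) p"
    using C[unfolded numeral_2_eq_2] U p by (simp_all add: continuous_on_eq_continuous_at)
  then obtain \<delta>1 \<delta>2 where \<delta>: "\<delta>1 > 0" "\<delta>2 > 0"
    "\<And>x. dist x p < \<delta>1 \<Longrightarrow> \<bar>pd j (pd i h) x - pd j (pd i h) p\<bar> < ?d / 2"
    "\<And>x. dist x p < \<delta>2 \<Longrightarrow> \<bar>pd i (pd j h) x - pd i (pd j h) p\<bar> < ?d / 2"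
    using d half_gt_zero unfolding continuous_at_eps_delta dist_real_def by metis
  define s where "s = min (r/3) (min (\<delta>1/3) (\<delta>2/3))"
  have s: "s > 0" "3 * s \<le> r" "3 * s \<le> \<delta>1" "3 * s \<le> \<delta>2" using r \<delta> unfolding s_def by auto
  have square: "p + x *\<^sub>R axis i 1 + y *\<^sub>R axis j 1 \<in> U"
    if "0 \<le> x" "x \<le> s" "0 \<le> y" "y \<le> s" for x y i j
    using dist_square_corner[OF that s(1), of p i j] s(2) r(2) by (auto simp: dist_commute)
  obtain x1 y1 where m1: "0 < x1" "x1 < s" "0 < y1" "y1 < s"
    "h (p + s *\<^sub>R axis i 1 + s *\<^sub>R axis j 1) - h (p + s *\<^sub>R axis i 1) - h (p + s *\<^sub>R axis j 1) + h p
      = s * s * pd j (pd i h) (p + x1 *\<^sub>R axis i 1 + y1 *\<^sub>R axis j 1)"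
    using second_difference_mean_value[OF U C s(1) square] by blast
  obtain x2 y2 where m2: "0 < x2" "x2 < s" "0 < y2" "y2 < s"
    "h (p + s *\<^sub>R axis j 1 + s *\<^sub>R axis i 1) - h (p + s *\<^sub>R axis j 1) - h (p + s *\<^sub>R axis i 1) + h p
      = s * s * pd i (pd j h) (p + x2 *\<^sub>R axis j 1 + y2 *\<^sub>R axis i 1)"
    using second_difference_mean_value[OF U C s(1) square] by blast
  have "p + s *\<^sub>R axis j 1 + s *\<^sub>R axis i 1 = p + s *\<^sub>R axis i 1 + s *\<^sub>R axis j (1::real)"
    by (simp add: algebra_simps)
  then have "h (p + s *\<^sub>R axis j 1 + s *\<^sub>R axis i 1) = h (p + s *\<^sub>R axis i 1 + s *\<^sub>R axis j (1::real))"
    by (rule arg_cong)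
  then have "s * s * pd j (pd i h) (p + x1 *\<^sub>R axis i 1 + y1 *\<^sub>R axis j 1)
      = s * s * pd i (pd j h) (p + x2 *\<^sub>R axis j 1 + y2 *\<^sub>R axis i 1)"
    using m1(5) m2(5) by linarith
  then have "pd j (pd i h) (p + x1 *\<^sub>R axis i 1 + y1 *\<^sub>R axis j 1)
      = pd i (pd j h) (p + x2 *\<^sub>R axis j 1 + y2 *\<^sub>R axis i 1)"
    using s(1) by simp
  moreover have "\<bar>pd j (pd i h) (p + x1 *\<^sub>R axis i 1 + y1 *\<^sub>R axis j 1) - pd j (pd i h) p\<bar> < ?d / 2"
  proof -
    have "dist (p + x1 *\<^sub>R axis i 1 + y1 *\<^sub>R axis j 1) p < 3 * s"
      by (rule dist_square_corner) (use m1(1-4) s(1) in auto)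
    then show ?thesis using \<delta>(3) s(3) by simp
  qed
  moreover have "\<bar>pd i (pd j h) (p + x2 *\<^sub>R axis j 1 + y2 *\<^sub>R axis i 1) - pd i (pd j h) p\<bar> < ?d / 2"
  proof -
    have "dist (p + x2 *\<^sub>R axis j 1 + y2 *\<^sub>R axis i 1) p < 3 * s"
      by (rule dist_square_corner) (use m2(1-4) s(1) in auto)
    then show ?thesis using \<delta>(4) s(4) by simp
  qed
  moreover have "\<And>a b P Q :: real. a = b \<Longrightarrow> \<bar>a - P\<bar> < \<bar>P - Q\<bar> / 2 \<Longrightarrow> \<bar>b - Q\<bar> < \<bar>P - Q\<bar> / 2 \<Longrightarrow> False"
    by (simp add: abs_if split: if_splits)
  ultimately show False by blast
qed

lemma pd_pd_commute:
  fixes h :: "real^'n::finite \<Rightarrow> 'b::euclidean_space"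
  assumes U: "open U" and C: "Ck 2 h U" and p: "p \<in> U"
  shows "pd j (pd i h) p = pd i (pd j h) p"
proof (rule euclidean_eqI)
  fix b :: 'b
  have hd: "\<And>q. q \<in> U \<Longrightarrow> h differentiable (at q)"
    and pdd: "\<And>q k. q \<in> U \<Longrightarrow> pd k h differentiable (at q)"
    using C[unfolded numeral_2_eq_2] U by (simp_all add: differentiable_on_eq_differentiable_at)
  define hb where "hb q = inner (h q) b" for q
  have L: "bounded_linear (\<lambda>x::'b. inner x b)" by (rule bounded_linear_inner_left)
  have pd_hb: "pd k h q \<bullet> b = pd k hb q" if "q \<in> U" for k q
    unfolding hb_def using pd_linear[OF L hd[OF that]] by simp
  have "pd j (pd i h) p \<bullet> b = pd j (\<lambda>q. pd i h q \<bullet> b) p"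
    using pd_linear[OF L pdd[OF p]] by simp
  also have "\<dots> = pd j (pd i hb) p" by (rule pd_cong_open[OF U p]) (rule pd_hb)
  also have "\<dots> = pd i (pd j hb) p"
    using pd_pd_commute_real[OF U _ p] Ck_linear[OF L U C] unfolding hb_def by blast
  also have "\<dots> = pd i (\<lambda>q. pd j h q \<bullet> b) p" by (rule pd_cong_open[OF U p]) (rule pd_hb[symmetric])
  also have "\<dots> = pd i (pd j h) p \<bullet> b" using pd_linear[OF L pdd[OF p]] by simp
  finally show "pd j (pd i h) p \<bullet> b = pd i (pd j h) p \<bullet> b" .
qed

definition hessian :: "(real^'n::finite \<Rightarrow> 'b::real_normed_vector) \<Rightarrow> real^'n \<Rightarrow> real^'n \<Rightarrow> real^'n \<Rightarrow> 'b" where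
  "hessian F p x y = (\<Sum>j\<in>UNIV. \<Sum>k\<in>UNIV. (x $ j * y $ k) *\<^sub>R pd j (pd k F) p)"

lemma hessian_sym:
  fixes F :: "real^'n::finite \<Rightarrow> 'b::euclidean_space"
  assumes "open U" "smooth_on F U" "p \<in> U"
  shows "hessian F p x y = hessian F p y x"
proof -
  have "hessian F p x y = (\<Sum>k\<in>UNIV. \<Sum>j\<in>UNIV. (x $ j * y $ k) *\<^sub>R pd j (pd k F) p)"
    unfolding hessian_def by (rule sum.swap)
  also have "\<dots> = hessian F p y x"
    unfolding hessian_def using pd_pd_commute[OF assms(1) smooth_on_imp_Ck[OF assms(2)] assms(3)]
    by (simp add: mult.commute)
  finally show ?thesis .
qed

lemma hessian_axis_left: "hessian F p (axis i 1) y = (\<Sum>k\<in>UNIV. y $ k *\<^sub>R pd i (pd k F) p)"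
proof -
  have "hessian F p (axis i 1) y = (\<Sum>j\<in>UNIV. if j = i then (\<Sum>k\<in>UNIV. y $ k *\<^sub>R pd j (pd k F) p) else 0)"
    unfolding hessian_def axis_def by (intro sum.cong refl) (auto simp: scaleR_sum_right)
  then show ?thesis by simp
qed

lemma hessian_eq_sum_axis_left: "hessian F p x y = (\<Sum>i\<in>UNIV. x $ i *\<^sub>R hessian F p (axis i 1) y)"
  unfolding hessian_axis_left unfolding hessian_def by (simp add: scaleR_sum_right)

lemma dird_dird:
  fixes F :: "real^'n::finite \<Rightarrow> 'b::real_normed_vector" and X Y :: "real^'n \<Rightarrow> real^'n"
  assumes U: "open U" and p: "p \<in> U" and sF: "smooth_on F U" and sY: "smooth_on Y U"
  shows "dird (dird F Y) X p = dird F (dird Y X) p + hessian F p (X p) (Y p)"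
proof -
  have Fd: "\<And>q. q \<in> U \<Longrightarrow> F differentiable (at q)"
    and Yd: "Y differentiable (at p)"
    and Ykd: "\<And>k. (\<lambda>q. Y q $ k) differentiable (at p)"
    and pFd: "\<And>k. pd k F differentiable (at p)"
    using smooth_on_differentiable_at[OF _ U] sF sY p smooth_on_vec_nth[OF U sY] smooth_on_pd[OF sF]
    by blast+
  have "dird (dird F Y) X p = dird (\<lambda>q. \<Sum>k\<in>UNIV. (Y q $ k) *\<^sub>R pd k F q) X p"
    by (rule dird_cong_open[OF U p]) (rule dird_eq_sum_pd[OF Fd])
  also have "\<dots> = (\<Sum>k\<in>UNIV. dird (\<lambda>q. (Y q $ k) *\<^sub>R pd k F q) X p)"
    by (rule dird_sum) (use Ykd pFd in \<open>auto intro!: differentiable_scaleR\<close>)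
  also have "\<dots> = (\<Sum>k\<in>UNIV. (Y p $ k) *\<^sub>R dird (pd k F) X p + dird (\<lambda>q. Y q $ k) X p *\<^sub>R pd k F p)"
    using dird_bilinear[OF bounded_bilinear_scaleR Ykd pFd] by simp
  also have "\<dots> = (\<Sum>k\<in>UNIV. dird Y X p $ k *\<^sub>R pd k F p)
          + (\<Sum>k\<in>UNIV. \<Sum>j\<in>UNIV. (X p $ j * Y p $ k) *\<^sub>R pd j (pd k F) p)"
    using dird_vec_nth[OF Yd] dird_eq_sum_pd[OF pFd]
    by (simp add: sum.distrib scaleR_sum_right add.commute mult.commute)
  also have "\<dots> = dird F (dird Y X) p + hessian F p (X p) (Y p)"
    unfolding hessian_def dird_def frechet_derivative_eq_sum_pd[OF Fd[OF p]] by (subst sum.swap) simp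
  finally show ?thesis .
qed

definition lie_bracket :: "(real^'n::finite \<Rightarrow> real^'n) \<Rightarrow> (real^'n \<Rightarrow> real^'n) \<Rightarrow> real^'n \<Rightarrow> real^'n" where
  "lie_bracket X Y q = dird Y X q - dird X Y q"

lemma dird_lie_bracket:
  fixes F :: "real^'n::finite \<Rightarrow> 'b::euclidean_space" and X Y :: "real^'n \<Rightarrow> real^'n"
  assumes U: "open U" and p: "p \<in> U" and sF: "smooth_on F U" and sX: "smooth_on X U" and sY: "smooth_on Y U"
  shows "dird (dird F Y) X p - dird (dird F X) Y p = dird F (lie_bracket X Y) p"
proof -
  have "linear (frechet_derivative F (at p))"
    using linear_frechet_derivative[OF smooth_on_differentiable_at[OF sF U p]] .
  then show ?thesis
    unfolding dird_dird[OF U p sF sX] dird_dird[OF U p sF sY] hessian_sym[OF U sF p, of "X p"]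
    by (simp add: dird_def lie_bracket_def linear_diff)
qed

section \<open>The induced metric\<close>

lemma orthonormal_expansion:
  fixes v :: "nat \<Rightarrow> real^'m::finite"
  assumes on: "\<And>A B. A < CARD('m) \<Longrightarrow> B < CARD('m) \<Longrightarrow> inner (v A) (v B) = (if A = B then 1 else 0)"
  shows "w = (\<Sum>A<CARD('m). inner w (v A) *\<^sub>R v A)"
proof -
  let ?n = "CARD('m)"
  let ?S = "v ` {..<?n}"
  have inj: "inj_on v {..<?n}"
  proof (rule inj_onI)
    fix A B assume "A \<in> {..<?n}" "B \<in> {..<?n}" "v A = v B"
    then show "A = B" using on[of A A] on[of A B] by (auto split: if_splits)
  qed
  have "pairwise orthogonal ?S"
    unfolding pairwise_def orthogonal_def using on inj by (auto simp: inj_on_def)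
  moreover have "0 \<notin> ?S" using on by force
  ultimately have "independent ?S" by (rule pairwise_orthogonal_independent)
  then have span: "r \<in> span ?S" for r
    using card_eq_dim[of ?S UNIV] card_image[OF inj] by auto
  define r where "r = w - (\<Sum>A<?n. inner w (v A) *\<^sub>R v A)"
  have "orthogonal r y" if "y \<in> ?S" for y
  proof -
    obtain B where B: "B < ?n" "y = v B" using \<open>y \<in> ?S\<close> by auto
    have "inner (\<Sum>A<?n. inner w (v A) *\<^sub>R v A) (v B) = (\<Sum>A<?n. if A = B then inner w (v A) else 0)"
      unfolding inner_sum_left by (rule sum.cong) (use on B(1) in auto)
    also have "\<dots> = inner w (v B)" using B(1) by (simp add: sum.delta)
    finally show ?thesis unfolding orthogonal_def r_def B(2) by (simp add: inner_diff_left)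
  qed
  then have "orthogonal r r" using orthogonal_to_span[OF span] by blast
  then show ?thesis unfolding r_def by (simp add: orthogonal_def)
qed

lemma inner_orthonormal_expansion:
  fixes v :: "nat \<Rightarrow> real^'m::finite"
  assumes on: "\<And>A B. A < CARD('m) \<Longrightarrow> B < CARD('m) \<Longrightarrow> inner (v A) (v B) = (if A = B then 1 else 0)"
  shows "inner w w' = (\<Sum>A<CARD('m). inner w (v A) * inner w' (v A))"
proof -
  have "inner w w' = inner w (\<Sum>A<CARD('m). inner w' (v A) *\<^sub>R v A)"
    using orthonormal_expansion[OF on, of w'] by simp
  then show ?thesis by (simp add: inner_sum_right mult.commute)
qed

lemma inner_sum_scaleR_sum:
  "inner (\<Sum>k\<in>K. x k *\<^sub>R A k) (\<Sum>l\<in>L. y l *\<^sub>R B l) = (\<Sum>k\<in>K. \<Sum>l\<in>L. x k * y l * inner (A k) (B l))"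
  by (simp add: inner_sum_left inner_sum_right sum_distrib_left mult.assoc)
    (subst sum.swap, simp add: mult_ac)

lemma sum_swap3: "(\<Sum>k\<in>A. \<Sum>i\<in>B. \<Sum>j\<in>C. g k i j) = (\<Sum>i\<in>B. \<Sum>j\<in>C. \<Sum>k\<in>A. g k i j)"
proof -
  have "(\<Sum>k\<in>A. \<Sum>i\<in>B. \<Sum>j\<in>C. g k i j) = (\<Sum>i\<in>B. \<Sum>k\<in>A. \<Sum>j\<in>C. g k i j)" by (rule sum.swap)
  also have "\<dots> = (\<Sum>i\<in>B. \<Sum>j\<in>C. \<Sum>k\<in>A. g k i j)" by (rule sum.cong[OF refl]) (rule sum.swap)
  finally show ?thesis .
qed

lemma metric_nth: "metric f q $ i $ j = inner (pd i f q) (pd j f q)"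
  by (simp add: metric_def)

lemma matrix_matrix_mult_nth: "((A::real^'n::finite^'n) ** B) $ i $ j = (\<Sum>k\<in>UNIV. A $ i $ k * B $ k $ j)"
  by (simp add: matrix_matrix_mult_def)

lemma mat_1_nth: "(mat 1 :: real^'n::finite^'n) $ i $ j = (if i = j then 1 else 0)"
  by (simp add: mat_def)

lemma matrix_inv_unique:
  fixes g Q :: "real^'n::finite^'n"
  assumes "g ** Q = mat 1"
  shows "matrix_inv g = Q"
  unfolding matrix_inv_def
proof (rule some_equality)
  show "g ** Q = mat 1 \<and> Q ** g = mat 1" using assms matrix_left_right_inverse by blast
next
  fix A assume A: "g ** A = mat 1 \<and> A ** g = mat 1"
  have "A = A ** (g ** Q)" using assms by simp
  also have "\<dots> = (A ** g) ** Q" by (simp add: matrix_mul_assoc)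
  finally show "A = Q" using A by simp
qed

lemma ginner_eq_inner_frechet_derivative:
  fixes f :: "real^'n::finite \<Rightarrow> 'm::real_inner"
  assumes "f differentiable (at q)"
  shows "ginner f q X Y = inner (frechet_derivative f (at q) X) (frechet_derivative f (at q) Y)"
  unfolding ginner_def metric_def frechet_derivative_eq_sum_pd[OF assms]
  by (simp add: inner_sum_left inner_sum_right sum_distrib_left sum_distrib_right algebra_simps)
    (rule sum.swap)

lemma ginner_sum_scaleR_left:
  fixes f :: "real^'n::finite \<Rightarrow> 'm::real_inner"
  assumes "f differentiable (at q)"
  shows "ginner f q (\<Sum>i\<in>S. c i *\<^sub>R Z i) Y = (\<Sum>i\<in>S. c i * ginner f q (Z i) Y)"
  using linear_frechet_derivative[OF assms]
  by (simp add: ginner_eq_inner_frechet_derivative[OF assms] linear_sum linear_scale inner_sum_left)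

lemma ginner_axis_left: "ginner f q (axis j 1) Y = (\<Sum>k\<in>UNIV. metric f q $ j $ k * Y $ k)"
proof -
  have "ginner f q (axis j 1) Y = (\<Sum>i\<in>UNIV. if i = j then (\<Sum>k\<in>UNIV. metric f q $ i $ k * Y $ k) else 0)"
    unfolding ginner_def axis_def by (intro sum.cong refl) auto
  then show ?thesis by simp
qed

lemma pd_metric_nth:
  fixes f :: "real^'n::finite \<Rightarrow> 'm::real_inner"
  assumes "pd j f differentiable (at q)" "pd l f differentiable (at q)"
  shows "pd i (\<lambda>q. metric f q $ j $ l) q
       = inner (pd j f q) (pd i (pd l f) q) + inner (pd i (pd j f) q) (pd l f q)"
  unfolding metric_nth using pd_bilinear[OF bounded_bilinear_inner assms] .

lemma christoffel_first_kind:
  fixes f :: "real^'n::finite \<Rightarrow> real^'m::finite"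
  assumes U: "open U" and q: "q \<in> U" and sf: "smooth_on f U" and Q: "metric f q ** Q = mat 1"
  shows "(\<Sum>k\<in>UNIV. metric f q $ l $ k * christoffel f k i j q) = inner (pd i (pd j f) q) (pd l f q)"
proof -
  have pdd: "\<And>a. pd a f differentiable (at q)"
    using smooth_on_differentiable_at[OF smooth_on_pd[OF sf] U q] .
  have sym: "\<And>a b. pd a (pd b f) q = pd b (pd a f) q"
    using pd_pd_commute[OF U smooth_on_imp_Ck[OF sf] q] by blast
  define S where "S m = pd i (\<lambda>q. metric f q $ j $ m) q + pd j (\<lambda>q. metric f q $ i $ m) q
       - pd m (\<lambda>q. metric f q $ i $ j) q" for m
  have S: "S m = 2 * inner (pd i (pd j f) q) (pd m f q)" for m
    unfolding S_def pd_metric_nth[OF pdd pdd] using sym[of i j] sym[of m j] sym[of m i]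
    by (simp add: inner_commute)
  have "(\<Sum>k\<in>UNIV. metric f q $ l $ k * christoffel f k i j q)
      = (\<Sum>k\<in>UNIV. metric f q $ l $ k * ((1/2) * (\<Sum>m\<in>UNIV. Q $ k $ m * S m)))"
    unfolding christoffel_def matrix_inv_unique[OF Q] S_def by simp
  also have "\<dots> = (1/2) * (\<Sum>m\<in>UNIV. (\<Sum>k\<in>UNIV. metric f q $ l $ k * Q $ k $ m) * S m)"
    by (simp add: sum_distrib_left sum_distrib_right algebra_simps) (rule sum.swap)
  also have "\<dots> = (1/2) * (\<Sum>m\<in>UNIV. (if l = m then 1 else 0) * S m)"
    using Q by (simp add: matrix_matrix_mult_nth[symmetric] mat_1_nth)
  also have "\<dots> = (1/2) * (\<Sum>m\<in>UNIV. if l = m then S m else 0)"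
    by (intro arg_cong[where f = "(*) (1/2)"] sum.cong) auto
  also have "\<dots> = inner (pd i (pd j f) q) (pd l f q)" using S by simp
  finally show ?thesis .
qed

text \<open>The Gauss formula: \<open>\<nabla>\<^sub>X Y\<close> is the tangential part of the second derivative \<open>X(Y f)\<close>.\<close>

lemma ginner_covd:
  fixes f :: "real^'n::finite \<Rightarrow> real^'m::finite" and X Y :: "real^'n \<Rightarrow> real^'n"
  assumes U: "open U" and q: "q \<in> U" and sf: "smooth_on f U" and sY: "smooth_on Y U"
    and Q: "metric f q ** Q = mat 1"
  shows "ginner f q (covd f X Y q) W = inner (dird (dird f Y) X q) (frechet_derivative f (at q) W)"
proof -
  have fd: "f differentiable (at q)" using smooth_on_differentiable_at[OF sf U q] .
  have Yd: "Y differentiable (at q)" using smooth_on_differentiable_at[OF sY U q] .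
  define fW where "fW = frechet_derivative f (at q) W"
  have fW: "fW = (\<Sum>l\<in>UNIV. W $ l *\<^sub>R pd l f q)"
    unfolding fW_def using frechet_derivative_eq_sum_pd[OF fd] .
  have fW_nth: "inner (pd k f q) fW = (\<Sum>l\<in>UNIV. W $ l * metric f q $ l $ k)" for k
    unfolding fW by (simp add: inner_sum_right metric_nth inner_commute)
  have Gamma: "(\<Sum>k\<in>UNIV. christoffel f k i j q * inner (pd k f q) fW) = inner (pd i (pd j f) q) fW" for i j
  proof -
    have "(\<Sum>k\<in>UNIV. christoffel f k i j q * inner (pd k f q) fW)
        = (\<Sum>k\<in>UNIV. \<Sum>l\<in>UNIV. W $ l * (metric f q $ l $ k * christoffel f k i j q))"
      unfolding fW_nth by (simp add: sum_distrib_left algebra_simps)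
    also have "\<dots> = (\<Sum>l\<in>UNIV. W $ l * (\<Sum>k\<in>UNIV. metric f q $ l $ k * christoffel f k i j q))"
      by (subst sum.swap) (simp add: sum_distrib_left)
    finally show ?thesis
      unfolding christoffel_first_kind[OF U q sf Q] fW by (simp add: inner_sum_right)
  qed
  have "ginner f q (covd f X Y q) W = (\<Sum>k\<in>UNIV. covd f X Y q $ k * inner (pd k f q) fW)"
    unfolding ginner_eq_inner_frechet_derivative[OF fd] frechet_derivative_eq_sum_pd[OF fd, of "covd f X Y q"]
      fW_def[symmetric]
    by (simp add: inner_sum_left)
  also have "\<dots> = (\<Sum>k\<in>UNIV. (dird Y X q $ k
      + (\<Sum>i\<in>UNIV. \<Sum>j\<in>UNIV. christoffel f k i j q * X q $ i * Y q $ j)) * inner (pd k f q) fW)"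
    unfolding covd_def using dird_vec_nth[OF Yd] by simp
  also have "\<dots> = (\<Sum>k\<in>UNIV. dird Y X q $ k * inner (pd k f q) fW)
      + (\<Sum>k\<in>UNIV. \<Sum>i\<in>UNIV. \<Sum>j\<in>UNIV. (X q $ i * Y q $ j) * (christoffel f k i j q * inner (pd k f q) fW))"
    unfolding distrib_right sum.distrib sum_distrib_right by (simp add: mult_ac)
  also have "\<dots> = (\<Sum>k\<in>UNIV. dird Y X q $ k * inner (pd k f q) fW)
      + (\<Sum>i\<in>UNIV. \<Sum>j\<in>UNIV. (X q $ i * Y q $ j) * inner (pd i (pd j f) q) fW)"
    unfolding sum_swap3 sum_distrib_left[symmetric] Gamma ..
  also have "\<dots> = inner (dird f (dird Y X) q + hessian f q (X q) (Y q)) fW"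
    unfolding dird_def frechet_derivative_eq_sum_pd[OF fd] hessian_def
      inner_add_left inner_sum_left inner_scaleR_left ..
  finally show ?thesis unfolding dird_dird[OF U q sf sY] fW_def .
qed

lemma laplace_beltrami_cong_open:
  assumes U: "open U" and p: "p \<in> U" and eq: "\<And>q. q \<in> U \<Longrightarrow> \<phi> q = \<psi> q"
  shows "laplace_beltrami f \<phi> p = laplace_beltrami f \<psi> p"
proof -
  have "pd j \<phi> q = pd j \<psi> q" if "q \<in> U" for j q
    by (rule pd_cong_open[OF U that]) (rule eq)
  then have "pd i (\<lambda>q. sqrt (det (metric f q)) * (\<Sum>j\<in>UNIV. matrix_inv (metric f q) $ i $ j * pd j \<phi> q)) p
      = pd i (\<lambda>q. sqrt (det (metric f q)) * (\<Sum>j\<in>UNIV. matrix_inv (metric f q) $ i $ j * pd j \<psi> q)) p" for i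
    by (intro pd_cong_open[OF U p]) simp
  then show ?thesis unfolding laplace_beltrami_def by simp
qed

definition adjugate3 :: "real^3^3 \<Rightarrow> real^3^3" where
  "adjugate3 A = (\<chi> i j. if i = 1 \<and> j = 1 then A$2$2 * A$3$3 - A$2$3 * A$3$2
    else if i = 1 \<and> j = 2 then A$1$3 * A$3$2 - A$1$2 * A$3$3
    else if i = 1 \<and> j = 3 then A$1$2 * A$2$3 - A$1$3 * A$2$2
    else if i = 2 \<and> j = 1 then A$2$3 * A$3$1 - A$2$1 * A$3$3
    else if i = 2 \<and> j = 2 then A$1$1 * A$3$3 - A$1$3 * A$3$1
    else if i = 2 \<and> j = 3 then A$1$3 * A$2$1 - A$1$1 * A$2$3
    else if i = 3 \<and> j = 1 then A$2$1 * A$3$2 - A$2$2 * A$3$1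
    else if i = 3 \<and> j = 2 then A$1$2 * A$3$1 - A$1$1 * A$3$2
    else A$1$1 * A$2$2 - A$1$2 * A$2$1)"

lemma three_neq: "(1::3) \<noteq> 2" "(1::3) \<noteq> 3" "(2::3) \<noteq> 3" "(2::3) \<noteq> 1" "(3::3) \<noteq> 1" "(3::3) \<noteq> 2"
  by simp_all

lemma adjugate3_mult: "adjugate3 A ** A = det A *\<^sub>R mat 1"
  unfolding vec_eq_iff matrix_matrix_mult_nth forall_3 sum_3 det_3
  by (simp add: adjugate3_def mat_def three_neq algebra_simps)

lemma adjugate3_eq_det_scaleR_inverse:
  assumes "A ** Q = mat 1"
  shows "adjugate3 A = det A *\<^sub>R Q"
proof -
  have "adjugate3 A = adjugate3 A ** (A ** Q)" using assms by simp
  also have "\<dots> = (adjugate3 A ** A) ** Q" by (simp add: matrix_mul_assoc)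
  finally have "adjugate3 A = (adjugate3 A ** A) ** Q" .
  then show ?thesis unfolding adjugate3_mult scalar_matrix_assoc[symmetric] by simp
qed

lemma pd_det3:
  fixes g :: "real^'n::finite \<Rightarrow> real^3^3"
  assumes diff: "\<And>k l. (\<lambda>q. g q $ k $ l) differentiable (at p)"
    and sym: "\<And>k l. pd i (\<lambda>q. g q $ k $ l) p = pd i (\<lambda>q. g q $ l $ k) p"
    and Q: "g p ** Q = mat 1"
  shows "pd i (\<lambda>q. det (g q)) p = det (g p) * (\<Sum>k\<in>UNIV. \<Sum>l\<in>UNIV. Q $ k $ l * pd i (\<lambda>q. g q $ k $ l) p)"
proof -
  have "pd i (\<lambda>q. det (g q)) p = (\<Sum>k\<in>UNIV. \<Sum>l\<in>UNIV. adjugate3 (g p) $ k $ l * pd i (\<lambda>q. g q $ k $ l) p)"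
    unfolding det_3 sum_3
    by (simp add: pd_add pd_diff pd_mult diff adjugate3_def three_neq sym[of 1 2] sym[of 1 3] sym[of 2 3]
        algebra_simps)
  also have "\<dots> = det (g p) * (\<Sum>k\<in>UNIV. \<Sum>l\<in>UNIV. Q $ k $ l * pd i (\<lambda>q. g q $ k $ l) p)"
    by (simp add: adjugate3_eq_det_scaleR_inverse[OF Q] sum_distrib_left mult.assoc)
  finally show ?thesis .
qed

section \<open>The moving frame and its structure equations\<close>

locale minimal_hypersurface_frame =
  fixes f N :: "real^3 \<Rightarrow> real^5"
    and lam :: "real^3 \<Rightarrow> real"
    and e1 e2 e3 :: "real^3 \<Rightarrow> real^3"
    and U :: "(real^3) set"
  assumes open_U: "open U"
    and smooth_f: "smooth_on f U"
    and f_sphere: "\<forall>p\<in>U. norm (f p) = 1"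
    and df_inj: "\<forall>p\<in>U. inj (frechet_derivative f (at p))"
    and smooth_N: "smooth_on N U"
    and N_unit_normal: "\<forall>p\<in>U. norm (N p) = 1 \<and> inner (N p) (f p) = 0
            \<and> (\<forall>X. inner (N p) (frechet_derivative f (at p) X) = 0)"
    and smooth_lam: "smooth_on lam U" and lam_pos: "\<forall>p\<in>U. lam p > 0"
    and smooth_e1: "smooth_on e1 U" and smooth_e2: "smooth_on e2 U" and smooth_e3: "smooth_on e3 U"
    and frame_orthonormal: "\<forall>p\<in>U. ginner f p (e1 p) (e1 p) = 1 \<and> ginner f p (e2 p) (e2 p) = 1
            \<and> ginner f p (e3 p) (e3 p) = 1 \<and> ginner f p (e1 p) (e2 p) = 0
            \<and> ginner f p (e1 p) (e3 p) = 0 \<and> ginner f p (e2 p) (e3 p) = 0"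
    and principal_directions: "\<forall>p\<in>U. dird N e1 p = - (lam p *\<^sub>R dird f e1 p)
            \<and> dird N e2 p = 0
            \<and> dird N e3 p = lam p *\<^sub>R dird f e3 p"
begin

text \<open>Frame indices are natural numbers; only \<open>1, 2, 3\<close> (and \<open>0, 4\<close> for \<open>moving_frame\<close>) are
  meaningful, the other indices give junk values.\<close>

definition frame :: "nat \<Rightarrow> real^3 \<Rightarrow> real^3" where
  "frame k = (if k = 1 then e1 else if k = 2 then e2 else e3)"

definition principal_curvature :: "nat \<Rightarrow> real^3 \<Rightarrow> real" where
  "principal_curvature k q = (if k = 1 then lam q else if k = 2 then 0 else - lam q)"

definition moving_frame :: "nat \<Rightarrow> real^3 \<Rightarrow> real^5" where
  "moving_frame A = (if A = 0 then f else if A = 4 then N else dird f (frame A))"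

definition connection_form :: "nat \<Rightarrow> nat \<Rightarrow> nat \<Rightarrow> real^3 \<Rightarrow> real" where
  "connection_form A B k q = inner (dird (moving_frame A) (frame k) q) (moving_frame B q)"

abbreviation u :: "real^3 \<Rightarrow> real" where "u \<equiv> connection_form 1 2 3"
abbreviation v :: "real^3 \<Rightarrow> real" where "v \<equiv> connection_form 1 2 1"

lemma frame_simps [simp]: "frame 1 = e1" "frame (Suc 0) = e1" "frame 2 = e2" "frame 3 = e3"
  by (simp_all add: frame_def)

lemma moving_frame_0 [simp]: "moving_frame 0 = f" and moving_frame_4 [simp]: "moving_frame 4 = N"
  by (simp_all add: moving_frame_def)

lemma moving_frame_tangent: "k \<in> {1,2,3} \<Longrightarrow> moving_frame k = dird f (frame k)"
  by (auto simp: moving_frame_def)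

lemma smooth_frame: "smooth_on (frame k) U"
  using smooth_e1 smooth_e2 smooth_e3 by (simp add: frame_def)

lemma smooth_moving_frame: "smooth_on (moving_frame A) U"
  unfolding moving_frame_def using smooth_f smooth_N smooth_on_dird[OF open_U smooth_f smooth_frame] by simp

lemma smooth_connection_form: "smooth_on (connection_form A B k) U"
  unfolding connection_form_def
  by (intro smooth_on_inner open_U smooth_on_dird smooth_moving_frame smooth_frame)

lemma f_differentiable: "q \<in> U \<Longrightarrow> f differentiable (at q)"
  using smooth_on_differentiable_at[OF smooth_f open_U] .

lemma moving_frame_differentiable: "q \<in> U \<Longrightarrow> moving_frame A differentiable (at q)"
  using smooth_on_differentiable_at[OF smooth_moving_frame open_U] .

lemma connection_form_differentiable: "q \<in> U \<Longrightarrow> connection_form A B k differentiable (at q)"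
  using smooth_on_differentiable_at[OF smooth_connection_form open_U] .

lemma lam_differentiable: "q \<in> U \<Longrightarrow> lam differentiable (at q)"
  using smooth_on_differentiable_at[OF smooth_lam open_U] .

lemma df_orthogonal_f:
  assumes q: "q \<in> U"
  shows "inner (frechet_derivative f (at q) w) (f q) = 0"
proof -
  have "dird (\<lambda>q. inner (f q) (f q)) (\<lambda>_. w) q = 0"
    by (rule dird_const_on[OF open_U q, of _ 1]) (use f_sphere in \<open>auto simp: norm_eq_1\<close>)
  moreover have "dird (\<lambda>q. inner (f q) (f q)) (\<lambda>_. w) q
      = inner (f q) (dird f (\<lambda>_. w) q) + inner (dird f (\<lambda>_. w) q) (f q)"
    using dird_bilinear[OF bounded_bilinear_inner f_differentiable[OF q] f_differentiable[OF q]] .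
  ultimately show ?thesis by (simp add: dird_def inner_commute)
qed

lemma moving_frame_orthonormal:
  assumes q: "q \<in> U" and "A < 5" "B < 5"
  shows "inner (moving_frame A q) (moving_frame B q) = (if A = B then 1 else 0)"
proof -
  have ff: "inner (f q) (f q) = 1" using f_sphere q by (simp add: norm_eq_1)
  have Nf: "inner (N q) (f q) = 0" and NN: "inner (N q) (N q) = 1"
    and NE: "inner (N q) (dird f (frame a) q) = 0" for a
    using N_unit_normal q by (auto simp: norm_eq_1 dird_def)
  have Ef: "inner (dird f (frame a) q) (f q) = 0" for a
    unfolding dird_def using df_orthogonal_f[OF q] .
  have EE: "inner (dird f (frame a) q) (dird f (frame b) q) = ginner f q (frame a q) (frame b q)" for a b
    unfolding dird_def using ginner_eq_inner_frechet_derivative[OF f_differentiable[OF q]] by simp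
  have gsym: "ginner f q X Y = ginner f q Y X" for X Y
    using ginner_eq_inner_frechet_derivative[OF f_differentiable[OF q]] by (simp add: inner_commute)
  have on: "ginner f q (e1 q) (e1 q) = 1" "ginner f q (e2 q) (e2 q) = 1" "ginner f q (e3 q) (e3 q) = 1"
    "ginner f q (e1 q) (e2 q) = 0" "ginner f q (e1 q) (e3 q) = 0" "ginner f q (e2 q) (e3 q) = 0"
    using frame_orthonormal q by auto
  moreover have "ginner f q (e2 q) (e1 q) = 0" "ginner f q (e3 q) (e1 q) = 0" "ginner f q (e3 q) (e2 q) = 0"
    using on gsym by metis+
  moreover have "A = 0 \<or> A = 1 \<or> A = 2 \<or> A = 3 \<or> A = 4" "B = 0 \<or> B = 1 \<or> B = 2 \<or> B = 3 \<or> B = 4"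
    using assms by auto
  ultimately show ?thesis
    using ff Ef NE Nf NN EE by (auto simp: moving_frame_def inner_commute)
qed

lemma moving_frame_expansion: "q \<in> U \<Longrightarrow> w = (\<Sum>A<5. inner w (moving_frame A q) *\<^sub>R moving_frame A q)"
  using orthonormal_expansion[of "\<lambda>A. moving_frame A q" w] moving_frame_orthonormal by simp

lemma inner_moving_frame_expansion:
  "q \<in> U \<Longrightarrow> inner w w' = (\<Sum>A<5. inner w (moving_frame A q) * inner w' (moving_frame A q))"
  using inner_orthonormal_expansion[of "\<lambda>A. moving_frame A q" w w'] moving_frame_orthonormal by simp

lemma frame_expansion:
  assumes q: "q \<in> U"
  shows "w = (\<Sum>a\<in>{1,2,3}. ginner f q w (frame a q) *\<^sub>R frame a q)"
proof -
  let ?df = "frechet_derivative f (at q)"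
  have lin: "linear ?df" using linear_frechet_derivative[OF f_differentiable[OF q]] .
  have "?df w = (\<Sum>A<5. inner (?df w) (moving_frame A q) *\<^sub>R moving_frame A q)"
    using moving_frame_expansion[OF q] .
  also have "\<dots> = (\<Sum>a\<in>{1,2,3}. inner (?df w) (moving_frame a q) *\<^sub>R moving_frame a q)"
  proof -
    have "inner (?df w) (moving_frame 0 q) = 0" "inner (?df w) (moving_frame 4 q) = 0"
      using df_orthogonal_f[OF q] N_unit_normal q by (simp_all add: inner_commute)
    then show ?thesis by (simp add: eval_nat_numeral)
  qed
  also have "\<dots> = (\<Sum>a\<in>{1,2,3}. ginner f q w (frame a q) *\<^sub>R ?df (frame a q))"
    using ginner_eq_inner_frechet_derivative[OF f_differentiable[OF q]] moving_frame_tangent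
    by (simp add: dird_def)
  also have "\<dots> = ?df (\<Sum>a\<in>{1,2,3}. ginner f q w (frame a q) *\<^sub>R frame a q)"
    unfolding linear_sum[OF lin] linear_scale[OF lin] ..
  finally show ?thesis using df_inj q by (auto dest: injD)
qed

lemma connection_form_antisym:
  assumes q: "q \<in> U" and A: "A < 5" and B: "B < 5"
  shows "connection_form A B k q = - connection_form B A k q"
proof -
  have "dird (\<lambda>q. inner (moving_frame A q) (moving_frame B q)) (frame k) q = 0"
    by (rule dird_const_on[OF open_U q, of _ "if A = B then 1 else 0"])
      (use moving_frame_orthonormal A B in auto)
  then show ?thesis
    using dird_bilinear[OF bounded_bilinear_inner moving_frame_differentiable[OF q] moving_frame_differentiable[OF q]]
    unfolding connection_form_def by (simp add: inner_commute)
qed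

lemma connection_form_self: "q \<in> U \<Longrightarrow> A < 5 \<Longrightarrow> connection_form A A k q = 0"
  using connection_form_antisym[of q A A k] by simp

lemma connection_form_swap:
  "q \<in> U \<Longrightarrow> A < B \<Longrightarrow> B \<le> 3 \<Longrightarrow> connection_form B A k q = - connection_form A B k q"
  using connection_form_antisym[of q B A k] by simp

lemma connection_form_0:
  assumes q: "q \<in> U" and B: "B < 5" and k: "k \<in> {1,2,3}"
  shows "connection_form 0 B k q = (if k = B then 1 else 0)"
  using moving_frame_orthonormal[OF q _ B, of k] moving_frame_tangent[OF k] k
  unfolding connection_form_def by auto

lemma dird_N_frame:
  "q \<in> U \<Longrightarrow> k \<in> {1,2,3} \<Longrightarrow> dird N (frame k) q = - (principal_curvature k q *\<^sub>R moving_frame k q)"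
  using principal_directions moving_frame_tangent by (auto simp: principal_curvature_def)

lemma connection_form_4:
  assumes q: "q \<in> U" and B: "B < 5" and k: "k \<in> {1,2,3}"
  shows "connection_form 4 B k q = - principal_curvature k q * (if k = B then 1 else 0)"
  using moving_frame_orthonormal[OF q _ B, of k] dird_N_frame[OF q k] k
  unfolding connection_form_def by auto

lemma connection_form_to_4:
  "q \<in> U \<Longrightarrow> B < 4 \<Longrightarrow> k \<in> {1,2,3}
    \<Longrightarrow> connection_form B 4 k q = principal_curvature k q * (if k = B then 1 else 0)"
  using connection_form_antisym[of q B 4 k] connection_form_4[of q B k] by simp

lemmas connection_form_table =
  connection_form_0 connection_form_4 connection_form_swap connection_form_to_4 connection_form_self

lemma lie_bracket_frame:
  assumes q: "q \<in> U" and k: "k \<in> {1,2,3}" and l: "l \<in> {1,2,3}"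
  shows "lie_bracket (frame k) (frame l) q
       = (\<Sum>m\<in>{1,2,3}. (connection_form l m k q - connection_form k m l q) *\<^sub>R frame m q)"
proof -
  have "ginner f q (lie_bracket (frame k) (frame l) q) (frame m q)
      = connection_form l m k q - connection_form k m l q" if m: "m \<in> {1,2,3}" for m
  proof -
    have "ginner f q (lie_bracket (frame k) (frame l) q) (frame m q)
        = inner (dird f (lie_bracket (frame k) (frame l)) q) (moving_frame m q)"
      using ginner_eq_inner_frechet_derivative[OF f_differentiable[OF q]] moving_frame_tangent[OF m]
      by (simp add: dird_def)
    also have "\<dots> = inner (dird (moving_frame l) (frame k) q - dird (moving_frame k) (frame l) q) (moving_frame m q)"
      using dird_lie_bracket[OF open_U q smooth_f smooth_frame smooth_frame, of l k]
        moving_frame_tangent[OF k] moving_frame_tangent[OF l] by simp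
    finally show ?thesis unfolding connection_form_def by (simp add: inner_diff_left)
  qed
  then show ?thesis using frame_expansion[OF q, of "lie_bracket (frame k) (frame l) q"] by simp
qed

lemma dird_lie_bracket_frame:
  fixes \<phi> :: "real^3 \<Rightarrow> 'b::real_normed_vector"
  assumes q: "q \<in> U" and d: "\<phi> differentiable (at q)" and k: "k \<in> {1,2,3}" and l: "l \<in> {1,2,3}"
  shows "dird \<phi> (lie_bracket (frame k) (frame l)) q
       = (\<Sum>m\<in>{1,2,3}. (connection_form l m k q - connection_form k m l q) *\<^sub>R dird \<phi> (frame m) q)"
  using dird_sum_scaleR_fields[OF d, of "\<lambda>m. connection_form l m k q - connection_form k m l q" frame "{1,2,3}"]
  unfolding dird_def lie_bracket_frame[OF q k l] by simp

text \<open>Flatness of \<open>\<real>\<^sup>5\<close>: the commutator of \<open>e\<^sub>k\<close> and \<open>e\<^sub>l\<close> applied to the moving frame,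
  expanded in the moving frame.\<close>

lemma structure_equation:
  assumes q: "q \<in> U" and A: "A < 5" and B: "B < 5" and k: "k \<in> {1,2,3}" and l: "l \<in> {1,2,3}"
  shows "dird (connection_form A B l) (frame k) q - dird (connection_form A B k) (frame l) q
     = (\<Sum>C<5. connection_form A C l q * connection_form B C k q - connection_form A C k q * connection_form B C l q)
       + (\<Sum>m\<in>{1,2,3}. (connection_form l m k q - connection_form k m l q) * connection_form A B m q)"
proof -
  let ?F = moving_frame
  have dird_form: "dird (connection_form A B l') (frame k') q
      = inner (dird (?F A) (frame l') q) (dird (?F B) (frame k') q)
        + inner (dird (dird (?F A) (frame l')) (frame k') q) (?F B q)" for k' l'
    unfolding connection_form_def
    using dird_bilinear[OF bounded_bilinear_inner smooth_on_differentiable_at[OF smooth_on_dird[OF open_U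
          smooth_moving_frame smooth_frame] open_U q] moving_frame_differentiable[OF q]] .
  have bracket: "inner (dird (?F A) (lie_bracket (frame k) (frame l)) q) (?F B q)
      = (\<Sum>m\<in>{1,2,3}. (connection_form l m k q - connection_form k m l q) * connection_form A B m q)"
    unfolding dird_lie_bracket_frame[OF q moving_frame_differentiable[OF q] k l] connection_form_def
    by (simp add: inner_sum_left inner_add_left)
  have expand: "inner (dird (?F A) (frame l') q) (dird (?F B) (frame k') q)
      = (\<Sum>C<5. connection_form A C l' q * connection_form B C k' q)" for k' l'
    unfolding connection_form_def using inner_moving_frame_expansion[OF q] .
  have "dird (connection_form A B l) (frame k) q - dird (connection_form A B k) (frame l) q
      = inner (dird (dird (?F A) (frame l)) (frame k) q - dird (dird (?F A) (frame k)) (frame l) q) (?F B q)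
        + (inner (dird (?F A) (frame l) q) (dird (?F B) (frame k) q)
           - inner (dird (?F A) (frame k) q) (dird (?F B) (frame l) q))"
    unfolding dird_form by (simp add: inner_diff_left)
  also have "\<dots> = (\<Sum>m\<in>{1,2,3}. (connection_form l m k q - connection_form k m l q) * connection_form A B m q)
      + (\<Sum>C<5. connection_form A C l q * connection_form B C k q - connection_form A C k q * connection_form B C l q)"
    unfolding dird_lie_bracket[OF open_U q smooth_moving_frame smooth_frame smooth_frame] bracket expand
    by (simp add: sum_subtractf)
  finally show ?thesis by simp
qed

lemma dird_connection_form_4:
  assumes q: "q \<in> U" and j: "j < 5" and l: "l \<in> {1,2,3}"
  shows "dird (connection_form 4 j l) X q
       = (if l = j then (if l = 1 then - dird lam X q else if l = 2 then 0 else dird lam X q) else 0)"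
proof -
  consider "l \<noteq> j" | "l = j" "l = 2" | "l = j" "l = 1" | "l = j" "l = 3" using l by auto
  then show ?thesis
  proof cases
    case 1
    then show ?thesis using dird_const_on[OF open_U q, of "connection_form 4 j l" 0 X] connection_form_4[OF _ j l] by simp
  next
    case 2
    then show ?thesis using dird_const_on[OF open_U q, of "connection_form 4 j l" 0 X] connection_form_4[OF _ j l]
      by (simp add: principal_curvature_def)
  next
    case 3
    then show ?thesis using dird_eq_minus_on[OF open_U q, of "connection_form 4 j l" lam X] connection_form_4[OF _ j l]
        lam_differentiable[OF q] by (simp add: principal_curvature_def)
  next
    case 4
    then show ?thesis using dird_cong_open[OF open_U q, of "connection_form 4 j l" lam X] connection_form_4[OF _ j l]
      by (simp add: principal_curvature_def)
  qed
qed

text \<open>Each Codazzi equation is the component \<open>A = 4\<close> of a structure equation, in which every connection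
  form involving \<open>F\<^sub>0 = f\<close> or \<open>F\<^sub>4 = N\<close> is known explicitly.\<close>

lemma codazzi_equations:
  assumes q: "q \<in> U"
  shows "connection_form 1 2 2 q = 0" "connection_form 2 3 2 q = 0"
    "connection_form 2 3 3 q = - v q" "connection_form 2 3 1 q = u q"
    "connection_form 1 3 2 q = u q / 2" "dird lam e2 q = v q * lam q"
proof -
  have lp: "lam q > 0" using lam_pos q by auto
  note simps = dird_connection_form_4[OF q] connection_form_table[OF q] lessThan_nat_numeral principal_curvature_def
  show "connection_form 1 2 2 q = 0"
    using structure_equation[OF q, of 4 2 1 2, simplified] lp by (simp add: simps)
  show "connection_form 2 3 2 q = 0"
    using structure_equation[OF q, of 4 2 3 2, simplified] lp by (simp add: simps)
  have v: "dird lam e2 q = v q * lam q"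
    using structure_equation[OF q, of 4 1 2 1, simplified] lp by (simp add: simps)
  then show "dird lam e2 q = v q * lam q" .
  have "connection_form 2 3 3 q * lam q = - dird lam e2 q"
    using structure_equation[OF q, of 4 3 2 3, simplified] lp by (simp add: simps)
  then have "(connection_form 2 3 3 q + v q) * lam q = 0" using v by (simp add: algebra_simps)
  then have "connection_form 2 3 3 q + v q = 0" using lp by simp
  then show "connection_form 2 3 3 q = - v q" by linarith
  have u: "2 * connection_form 1 3 2 q = u q"
    using structure_equation[OF q, of 4 1 2 3, simplified] lp by (simp add: simps)
  then show "connection_form 1 3 2 q = u q / 2" by simp
  have "connection_form 2 3 1 q = 2 * connection_form 1 3 2 q"
    using structure_equation[OF q, of 4 3 1 2, simplified] lp by (simp add: simps)
  then show "connection_form 2 3 1 q = u q" using u by simp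
qed

lemmas codazzi_table = codazzi_equations(1-5) codazzi_equations(1-5)[unfolded One_nat_def]

lemma dird_connection_form_codazzi:
  assumes q: "q \<in> U"
  shows "dird (connection_form 1 2 2) X q = 0"
    "dird (connection_form 3 2 3) X q = dird v X q"
    "dird (connection_form 3 2 1) X q = - dird u X q"
    "dird (connection_form 2 1 3) X q = - dird u X q"
    "dird (connection_form 2 1 1) X q = - dird v X q"
proof -
  show "dird (connection_form 1 2 2) X q = 0"
    using dird_const_on[OF open_U q, of "connection_form 1 2 2" 0 X] codazzi_equations by blast
  show "dird (connection_form 3 2 3) X q = dird v X q"
    by (rule dird_cong_open[OF open_U q]) (use codazzi_equations connection_form_swap in simp)
  show "dird (connection_form 3 2 1) X q = - dird u X q"
    by (rule dird_eq_minus_on[OF open_U q _ connection_form_differentiable[OF q]])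
      (use codazzi_equations connection_form_swap in simp)
  show "dird (connection_form 2 1 3) X q = - dird u X q"
    by (rule dird_eq_minus_on[OF open_U q _ connection_form_differentiable[OF q]])
      (use connection_form_swap in simp)
  show "dird (connection_form 2 1 1) X q = - dird v X q"
    by (rule dird_eq_minus_on[OF open_U q _ connection_form_differentiable[OF q]])
      (use connection_form_swap in simp)
qed

lemmas dird_codazzi_table = dird_connection_form_codazzi dird_connection_form_codazzi[unfolded One_nat_def]

text \<open>The Gauss equations, i.e. the structure equations with \<open>A, B \<in> {1,2,3}\<close>, once the Codazzi
  equations have been substituted.\<close>

lemma gauss_equations:
  assumes q: "q \<in> U"
  shows "dird u e2 q = 2 * v q * u q"
    "dird v e2 q = 1 + (v q)\<^sup>2 - (u q)\<^sup>2"
    "dird v e1 q = - dird u e3 q"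
    "dird v e3 q = dird u e1 q"
proof -
  note simps = dird_codazzi_table[OF q] codazzi_table[OF q] connection_form_table[OF q]
    lessThan_nat_numeral principal_curvature_def
  show "dird u e2 q = 2 * v q * u q"
    using structure_equation[OF q, of 1 2 2 3, simplified] by (simp add: simps)
  show "dird v e2 q = 1 + (v q)\<^sup>2 - (u q)\<^sup>2"
    using structure_equation[OF q, of 1 2 2 1, simplified] by (simp add: simps power2_eq_square)
  have "dird v e1 q + dird u e3 q = 0"
    using structure_equation[OF q, of 3 2 1 3, simplified] by (simp add: simps)
  then show "dird v e1 q = - dird u e3 q" by linarith
  show "dird v e3 q = dird u e1 q"
    using structure_equation[OF q, of 2 1 1 3, simplified] by (simp add: simps)
qed

section \<open>The metric and the Laplacian in the principal frame\<close>

definition inv_metric :: "real^3 \<Rightarrow> real^3^3" where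
  "inv_metric q = (\<chi> k l. \<Sum>a\<in>{1,2,3}. frame a q $ k * frame a q $ l)"

lemma inv_metric_nth: "inv_metric q $ k $ l = (\<Sum>a\<in>{1,2,3}. frame a q $ k * frame a q $ l)"
  by (simp add: inv_metric_def)

lemma metric_mult_inv_metric:
  assumes q: "q \<in> U"
  shows "metric f q ** inv_metric q = mat 1"
proof -
  have "(metric f q ** inv_metric q) $ j $ l = mat 1 $ j $ l" for j l
  proof -
    have "(metric f q ** inv_metric q) $ j $ l
        = (\<Sum>a\<in>{1,2,3}. (\<Sum>k\<in>UNIV. metric f q $ j $ k * frame a q $ k) * frame a q $ l)"
      unfolding matrix_matrix_mult_nth inv_metric_nth
      by (simp add: distrib_left sum.distrib sum_distrib_right mult.assoc)
    also have "\<dots> = (\<Sum>a\<in>{1,2,3}. ginner f q (axis j 1) (frame a q) *\<^sub>R frame a q) $ l"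
      unfolding ginner_axis_left by simp
    also have "\<dots> = mat 1 $ j $ l" using frame_expansion[OF q, of "axis j 1"] by (simp add: axis_def mat_1_nth)
    finally show ?thesis .
  qed
  then show ?thesis by (simp add: vec_eq_iff)
qed

lemma matrix_inv_metric: "q \<in> U \<Longrightarrow> matrix_inv (metric f q) = inv_metric q"
  using matrix_inv_unique metric_mult_inv_metric by blast

lemma det_metric_pos:
  assumes q: "q \<in> U"
  shows "det (metric f q) > 0"
proof -
  define P :: "real^3^3" where "P = (\<chi> k a. if a = 1 then e1 q $ k else if a = 2 then e2 q $ k else e3 q $ k)"
  have "inv_metric q = P ** transpose P"
    by (simp add: vec_eq_iff matrix_matrix_mult_nth sum_3 inv_metric_nth transpose_def P_def three_neq)
  then have "det (metric f q) * (det P * det P) = 1"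
    using metric_mult_inv_metric[OF q] det_mul[of "metric f q" "inv_metric q"] by (simp add: det_mul det_transpose)
  then show ?thesis
    by (metis less_eq_real_def mult_eq_0_iff mult_le_0_iff not_one_le_zero zero_less_one zero_le_square)
qed

lemma ginner_covd_frame:
  assumes q: "q \<in> U"
  shows "ginner f q (covd f e3 e1 q) (e2 q) = u q"
  using ginner_covd[OF open_U q smooth_f smooth_e1 metric_mult_inv_metric[OF q], of e3 "e2 q"]
    moving_frame_tangent[of 1] moving_frame_tangent[of 2]
  by (simp add: connection_form_def dird_def)

lemma dird_ln_lam:
  assumes q: "q \<in> U"
  shows "dird (\<lambda>q. ln (lam q)) e2 q = v q"
proof -
  have lp: "lam q > 0" using lam_pos q by auto
  have "((\<lambda>q. ln (lam q)) has_derivative (\<lambda>w. inverse (lam q) * frechet_derivative lam (at q) w)) (at q)"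
    using has_derivative_compose[OF lam_differentiable[OF q, unfolded frechet_derivative_works]
        DERIV_ln[OF lp, unfolded has_field_derivative_def]] .
  then have "dird (\<lambda>q. ln (lam q)) e2 q = inverse (lam q) * dird lam e2 q"
    using dird_of_has_derivative by (simp add: dird_def)
  also have "\<dots> = v q" using codazzi_equations(6)[OF q] lp by (simp add: field_simps)
  finally show ?thesis .
qed

text \<open>\<open>log_volume_pd p i\<close> is \<open>\<partial>\<^sub>i log \<surd>(det g)\<close> (see \<open>pd_det_metric\<close>).\<close>

definition log_volume_pd :: "real^3 \<Rightarrow> 3 \<Rightarrow> real" where
  "log_volume_pd p i = (\<Sum>a\<in>{1,2,3}. inner (hessian f p (axis i 1) (frame a p)) (dird f (frame a) p))"

lemma metric_nth_differentiable: "p \<in> U \<Longrightarrow> (\<lambda>q. metric f q $ k $ l) differentiable (at p)"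
  unfolding metric_nth
  by (rule differentiable_inner) (use smooth_on_differentiable_at[OF smooth_on_pd[OF smooth_f] open_U] in auto)

lemma pd_det_metric:
  assumes p: "p \<in> U"
  shows "pd i (\<lambda>q. det (metric f q)) p = 2 * det (metric f p) * log_volume_pd p i"
proof -
  have pdd: "\<And>a. pd a f differentiable (at p)"
    using smooth_on_differentiable_at[OF smooth_on_pd[OF smooth_f] open_U p] .
  define T where "T k l = inner (pd i (pd k f) p) (pd l f p)" for k l
  have pd_metric: "pd i (\<lambda>q. metric f q $ k $ l) p = T l k + T k l" for k l
    unfolding pd_metric_nth[OF pdd pdd] T_def by (simp add: inner_commute)
  have "pd i (\<lambda>q. det (metric f q)) p
      = det (metric f p) * (\<Sum>k\<in>UNIV. \<Sum>l\<in>UNIV. inv_metric p $ k $ l * (T l k + T k l))"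
    unfolding pd_metric[symmetric]
    by (rule pd_det3[OF metric_nth_differentiable[OF p] _ metric_mult_inv_metric[OF p]])
      (simp add: pd_metric add.commute)
  also have "(\<Sum>k\<in>UNIV. \<Sum>l\<in>UNIV. inv_metric p $ k $ l * (T l k + T k l))
      = 2 * (\<Sum>k\<in>UNIV. \<Sum>l\<in>UNIV. inv_metric p $ k $ l * T k l)"
    unfolding distrib_left sum.distrib by (subst (1) sum.swap) (simp add: inv_metric_nth mult.commute)
  also have "(\<Sum>k\<in>UNIV. \<Sum>l\<in>UNIV. inv_metric p $ k $ l * T k l)
      = (\<Sum>a\<in>{1,2,3}. \<Sum>k\<in>UNIV. \<Sum>l\<in>UNIV. frame a p $ k * frame a p $ l * T k l)"
    unfolding inv_metric_nth sum_distrib_right by (subst sum_swap3[symmetric]) simp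
  also have "\<dots> = log_volume_pd p i"
    unfolding log_volume_pd_def hessian_axis_left dird_eq_sum_pd[OF f_differentiable[OF p]] T_def
      inner_sum_scaleR_sum ..
  finally show ?thesis by simp
qed

lemma det_metric_differentiable: "p \<in> U \<Longrightarrow> (\<lambda>q. det (metric f q)) differentiable (at p)"
  unfolding det_3
  by (intro differentiable_add differentiable_diff differentiable_mult metric_nth_differentiable)

lemma pd_sqrt_det_metric:
  assumes p: "p \<in> U"
  shows "pd i (\<lambda>q. sqrt (det (metric f q))) p = sqrt (det (metric f p)) * log_volume_pd p i"
proof -
  let ?G = "det (metric f p)"
  have G: "?G > 0" using det_metric_pos[OF p] .
  have "pd i (\<lambda>q. sqrt (det (metric f q))) p = 2 * ?G * log_volume_pd p i / (2 * sqrt ?G)"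
    unfolding pd_sqrt[OF det_metric_differentiable[OF p] G] pd_det_metric[OF p] ..
  also have "\<dots> = (?G / sqrt ?G) * log_volume_pd p i" using G by simp
  also have "\<dots> = sqrt ?G * log_volume_pd p i" using G by (simp add: real_div_sqrt)
  finally show ?thesis .
qed

lemma inv_metric_gradient:
  assumes q: "q \<in> U" and d: "\<phi> differentiable (at q)"
  shows "(\<Sum>j\<in>UNIV. matrix_inv (metric f q) $ i $ j * pd j \<phi> q)
       = (\<Sum>a\<in>{1,2,3}. frame a q $ i * dird \<phi> (frame a) q)"
  unfolding matrix_inv_metric[OF q] inv_metric_nth dird_eq_sum_pd_real[OF d] sum_distrib_left sum_distrib_right
  by (subst sum.swap) (simp add: mult.assoc)

text \<open>The divergence of \<open>e\<^sub>b\<close>: \<open>div e\<^sub>b = \<Sum>\<^sub>a \<langle>\<nabla>\<^sub>e\<^sub>a e\<^sub>b, e\<^sub>a\<rangle>\<close>, computed in coordinates.\<close>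

lemma frame_divergence:
  assumes p: "p \<in> U" and b: "b \<in> {1,2,3}"
  shows "(\<Sum>i\<in>UNIV. pd i (\<lambda>q. frame b q $ i) p) + (\<Sum>i\<in>UNIV. frame b p $ i * log_volume_pd p i)
       = (\<Sum>a\<in>{1,2,3}. connection_form b a a p)"
proof -
  have fd: "f differentiable (at p)" using f_differentiable[OF p] .
  have ebd: "frame b differentiable (at p)" using smooth_on_differentiable_at[OF smooth_frame open_U p] .
  have form: "connection_form b a a p = ginner f p (dird (frame b) (frame a) p) (frame a p)
      + inner (hessian f p (frame b p) (frame a p)) (dird f (frame a) p)"
    if a: "a \<in> {1,2,3}" for a
    using moving_frame_tangent[OF b] moving_frame_tangent[OF a]
      dird_dird[OF open_U p smooth_f smooth_frame[of b], of "frame a"]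
      hessian_sym[OF open_U smooth_f p] ginner_eq_inner_frechet_derivative[OF fd]
    by (simp add: connection_form_def inner_add_left dird_def)
  have "(\<Sum>a\<in>{1,2,3}. ginner f p (dird (frame b) (frame a) p) (frame a p))
      = (\<Sum>i\<in>UNIV. (\<Sum>a\<in>{1,2,3}. ginner f p (pd i (frame b) p) (frame a p) *\<^sub>R frame a p) $ i)"
    unfolding dird_eq_sum_pd[OF ebd] ginner_sum_scaleR_left[OF fd]
    by (subst sum.swap) (simp add: mult.commute)
  also have "\<dots> = (\<Sum>i\<in>UNIV. pd i (\<lambda>q. frame b q $ i) p)"
    using frame_expansion[OF p] pd_vec_nth[OF ebd] by simp
  finally have first: "(\<Sum>a\<in>{1,2,3}. ginner f p (dird (frame b) (frame a) p) (frame a p))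
      = (\<Sum>i\<in>UNIV. pd i (\<lambda>q. frame b q $ i) p)" .
  have "(\<Sum>a\<in>{1,2,3}. inner (hessian f p (frame b p) (frame a p)) (dird f (frame a) p))
      = (\<Sum>a\<in>{1,2,3}. \<Sum>i\<in>UNIV. frame b p $ i * inner (hessian f p (axis i 1) (frame a p)) (dird f (frame a) p))"
    by (subst hessian_eq_sum_axis_left) (simp add: inner_sum_left)
  also have "\<dots> = (\<Sum>i\<in>UNIV. frame b p $ i * log_volume_pd p i)"
    unfolding log_volume_pd_def by (subst sum.swap) (simp add: sum_distrib_left distrib_left)
  finally have second: "(\<Sum>a\<in>{1,2,3}. inner (hessian f p (frame b p) (frame a p)) (dird f (frame a) p))
      = (\<Sum>i\<in>UNIV. frame b p $ i * log_volume_pd p i)" .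
  show ?thesis using form first second by (simp add: sum.distrib)
qed

lemma laplace_beltrami_frame:
  assumes p: "p \<in> U" and s\<phi>: "smooth_on \<phi> U"
  shows "laplace_beltrami f \<phi> p = (\<Sum>b\<in>{1,2,3}. dird (dird \<phi> (frame b)) (frame b) p)
          + (\<Sum>b\<in>{1,2,3}. dird \<phi> (frame b) p * (\<Sum>a\<in>{1,2,3}. connection_form b a a p))"
proof -
  define W where "W i q = (\<Sum>a\<in>{1,2,3}. frame a q $ i * dird \<phi> (frame a) q)" for i q
  have s\<phi>a: "smooth_on (dird \<phi> (frame a)) U" for a using smooth_on_dird[OF open_U s\<phi> smooth_frame] .
  have d\<phi>a: "dird \<phi> (frame a) differentiable (at p)" for a
    using smooth_on_differentiable_at[OF s\<phi>a open_U p] .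
  have dea: "(\<lambda>q. frame a q $ i) differentiable (at p)" for a i
    using smooth_on_differentiable_at[OF smooth_on_vec_nth[OF open_U smooth_frame] open_U p] .
  have Wd: "W i differentiable (at p)" for i
    unfolding W_def using d\<phi>a dea by (intro differentiable_sum differentiable_mult) auto
  have sG: "sqrt (det (metric f p)) > 0" using det_metric_pos[OF p] by simp
  have sGd: "(\<lambda>q. sqrt (det (metric f q))) differentiable (at p)"
    using has_derivative_sqrt[OF det_metric_differentiable[OF p] det_metric_pos[OF p]]
    unfolding differentiable_def by blast
  have "pd i (\<lambda>q. sqrt (det (metric f q)) * (\<Sum>j\<in>UNIV. matrix_inv (metric f q) $ i $ j * pd j \<phi> q)) p
      = pd i (\<lambda>q. sqrt (det (metric f q)) * W i q) p" for i
    by (rule pd_cong_open[OF open_U p])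
      (simp add: W_def inv_metric_gradient[OF _ smooth_on_differentiable_at[OF s\<phi> open_U]])
  then have "laplace_beltrami f \<phi> p
      = (1 / sqrt (det (metric f p))) * (\<Sum>i\<in>UNIV. pd i (\<lambda>q. sqrt (det (metric f q)) * W i q) p)"
    unfolding laplace_beltrami_def by simp
  also have "\<dots> = (1 / sqrt (det (metric f p)))
      * (sqrt (det (metric f p)) * (\<Sum>i\<in>UNIV. pd i (W i) p + log_volume_pd p i * W i p))"
    unfolding pd_mult[OF sGd Wd] pd_sqrt_det_metric[OF p] sum_distrib_left by (simp add: algebra_simps)
  also have "\<dots> = (\<Sum>i\<in>UNIV. pd i (W i) p + log_volume_pd p i * W i p)"
    using sG by simp
  also have "\<dots> = (\<Sum>a\<in>{1,2,3}. \<Sum>i\<in>UNIV. frame a p $ i * pd i (dird \<phi> (frame a)) p)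
      + (\<Sum>a\<in>{1,2,3}. dird \<phi> (frame a) p
          * ((\<Sum>i\<in>UNIV. pd i (\<lambda>q. frame a q $ i) p) + (\<Sum>i\<in>UNIV. frame a p $ i * log_volume_pd p i)))"
    unfolding W_def pd_sum[OF differentiable_mult[OF dea d\<phi>a]] pd_mult[OF dea d\<phi>a]
    by (simp add: sum.distrib sum_distrib_left sum_distrib_right algebra_simps sum.swap[of _ UNIV])
  also have "\<dots> = (\<Sum>b\<in>{1,2,3}. dird (dird \<phi> (frame b)) (frame b) p)
          + (\<Sum>b\<in>{1,2,3}. dird \<phi> (frame b) p * (\<Sum>a\<in>{1,2,3}. connection_form b a a p))"
    using frame_divergence[OF p] dird_eq_sum_pd_real[OF d\<phi>a] by simp
  finally show ?thesis .
qed

lemma dird_commutator_e1_e3: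
  fixes \<phi> :: "real^3 \<Rightarrow> real"
  assumes q: "q \<in> U" and s\<phi>: "smooth_on \<phi> U"
  shows "dird (dird \<phi> e3) e1 q - dird (dird \<phi> e1) e3 q
       = (\<Sum>m\<in>{1,2,3}. (connection_form 3 m 1 q - connection_form 1 m 3 q) * dird \<phi> (frame m) q)"
  using dird_lie_bracket[OF open_U q s\<phi> smooth_frame smooth_frame, of 3 1]
    dird_lie_bracket_frame[OF q smooth_on_differentiable_at[OF s\<phi> open_U q], of 1 3] by simp

lemma laplace_u:
  assumes p: "p \<in> U"
  shows "laplace_beltrami f u p = 0"
proof -
  note gauss = gauss_equations gauss_equations[unfolded One_nat_def]
  have e22: "dird (dird u e2) e2 p = 2 * (v p * dird u e2 p + dird v e2 p * u p)"
  proof -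
    have "dird (dird u e2) e2 p = dird (\<lambda>q. 2 * (v q * u q)) e2 p"
      by (rule dird_cong_open[OF open_U p]) (simp add: gauss)
    also have "\<dots> = 2 * dird (\<lambda>q. v q * u q) e2 p"
      using dird_linear[OF bounded_linear_mult_right differentiable_mult[OF
            connection_form_differentiable[OF p] connection_form_differentiable[OF p]], of 2]
      by (simp add: mult.commute)
    also have "\<dots> = 2 * (v p * dird u e2 p + dird v e2 p * u p)"
      using dird_mult[OF connection_form_differentiable[OF p] connection_form_differentiable[OF p]] by simp
    finally show ?thesis .
  qed
  have e13: "dird (dird u e1) e1 p + dird (dird u e3) e3 p
      = (\<Sum>m\<in>{1,2,3}. (connection_form 3 m 1 p - connection_form 1 m 3 p) * dird v (frame m) p)"
  proof -
    have "dird (dird v e3) e1 p = dird (dird u e1) e1 p"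
      by (rule dird_cong_open[OF open_U p]) (simp add: gauss)
    moreover have "dird (dird v e1) e3 p = - dird (dird u e3) e3 p"
      by (rule dird_eq_minus_on[OF open_U p])
        (simp_all add: gauss smooth_on_differentiable_at[OF
            smooth_on_dird[OF open_U smooth_connection_form smooth_e3] open_U p])
    ultimately show ?thesis
      using dird_commutator_e1_e3[OF p smooth_connection_form, of 1 2 1]
      by linarith
  qed
  show ?thesis
    unfolding laplace_beltrami_frame[OF p smooth_connection_form]
    using e22 e13
    by (simp add: gauss[OF p] codazzi_table[OF p] connection_form_table[OF p] principal_curvature_def
        algebra_simps power2_eq_square)
qed

lemma laplace_v:
  assumes p: "p \<in> U"
  shows "laplace_beltrami f v p = 0"
proof -
  note gauss = gauss_equations gauss_equations[unfolded One_nat_def]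
  have vd: "v differentiable (at p)" and ud: "u differentiable (at p)"
    using connection_form_differentiable[OF p] by auto
  have e22: "dird (dird v e2) e2 p = 2 * v p * dird v e2 p - 2 * u p * dird u e2 p"
  proof -
    have "dird (dird v e2) e2 p = dird (\<lambda>q. 1 + (v q * v q - u q * u q)) e2 p"
      by (rule dird_cong_open[OF open_U p]) (simp add: gauss power2_eq_square)
    also have "\<dots> = 2 * v p * dird v e2 p - 2 * u p * dird u e2 p"
      using dird_add[of "\<lambda>q. 1" p "\<lambda>q. v q * v q - u q * u q"] dird_diff[of "\<lambda>q. v q * v q" p "\<lambda>q. u q * u q"]
        dird_mult[OF vd vd] dird_mult[OF ud ud] vd ud
      by (simp add: dird_of_has_derivative[OF has_derivative_const])
    finally show ?thesis .
  qed
  have e13: "dird (dird v e1) e1 p + dird (dird v e3) e3 p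
      = - (\<Sum>m\<in>{1,2,3}. (connection_form 3 m 1 p - connection_form 1 m 3 p) * dird u (frame m) p)"
  proof -
    have "dird (dird v e3) e3 p = dird (dird u e1) e3 p"
      by (rule dird_cong_open[OF open_U p]) (simp add: gauss)
    moreover have "dird (dird v e1) e1 p = - dird (dird u e3) e1 p"
      by (rule dird_eq_minus_on[OF open_U p])
        (simp_all add: gauss smooth_on_differentiable_at[OF
            smooth_on_dird[OF open_U smooth_connection_form smooth_e3] open_U p])
    ultimately show ?thesis
      using dird_commutator_e1_e3[OF p smooth_connection_form, of 1 2 3]
      by linarith
  qed
  show ?thesis
    unfolding laplace_beltrami_frame[OF p smooth_connection_form]
    using e22 e13
    by (simp add: gauss[OF p] codazzi_table[OF p] connection_form_table[OF p] principal_curvature_def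
        algebra_simps power2_eq_square)
qed

lemma u_over_lam_sq_along_e2:
  assumes q: "q \<in> U"
  shows "(\<lambda>q. u q / (lam q)\<^sup>2) differentiable (at q)" "dird (\<lambda>q. u q / (lam q)\<^sup>2) e2 q = 0"
proof -
  have lp: "lam q > 0" using lam_pos q by auto
  let ?u' = "frechet_derivative u (at q)" and ?l' = "frechet_derivative lam (at q)"
  have D: "((\<lambda>q. u q / (lam q)\<^sup>2) has_derivative
      (\<lambda>w. (?u' w * (lam q)\<^sup>2 - u q * (of_nat 2 * ?l' w * lam q ^ (2 - 1))) / ((lam q)\<^sup>2 * (lam q)\<^sup>2))) (at q)"
    using connection_form_differentiable[OF q] lam_differentiable[OF q] lp
    by (intro has_derivative_divide' has_derivative_power) (auto simp: frechet_derivative_works)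
  then show "(\<lambda>q. u q / (lam q)\<^sup>2) differentiable (at q)" unfolding differentiable_def by blast
  show "dird (\<lambda>q. u q / (lam q)\<^sup>2) e2 q = 0"
    using dird_of_has_derivative[OF D, of e2] gauss_equations(1)[OF q] codazzi_equations(6)[OF q]
    by (simp add: dird_def power2_eq_square algebra_simps)
qed

end

theorem lemma1:
  fixes f N :: "real^3 \<Rightarrow> real^5"
    and lam :: "real^3 \<Rightarrow> real"
    and e1 e2 e3 :: "real^3 \<Rightarrow> real^3"
    and U :: "(real^3) set"
  assumes "open U"
    and "smooth_on f U"
    and "\<forall>p\<in>U. norm (f p) = 1"
    and "\<forall>p\<in>U. inj (frechet_derivative f (at p))"
    and "smooth_on N U"
    and "\<forall>p\<in>U. norm (N p) = 1 \<and> inner (N p) (f p) = 0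
            \<and> (\<forall>X. inner (N p) (frechet_derivative f (at p) X) = 0)"
    and "smooth_on lam U" and "\<forall>p\<in>U. lam p > 0"
    and "smooth_on e1 U" and "smooth_on e2 U" and "smooth_on e3 U"
    and "\<forall>p\<in>U. ginner f p (e1 p) (e1 p) = 1 \<and> ginner f p (e2 p) (e2 p) = 1
            \<and> ginner f p (e3 p) (e3 p) = 1 \<and> ginner f p (e1 p) (e2 p) = 0
            \<and> ginner f p (e1 p) (e3 p) = 0 \<and> ginner f p (e2 p) (e3 p) = 0"
    and "\<forall>p\<in>U. dird N e1 p = - (lam p *\<^sub>R dird f e1 p)
            \<and> dird N e2 p = 0
            \<and> dird N e3 p = lam p *\<^sub>R dird f e3 p"
  defines "u \<equiv> (\<lambda>p. ginner f p (covd f e3 e1 p) (e2 p))"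
    and "v \<equiv> (\<lambda>p. dird (\<lambda>q. ln (lam q)) e2 p)"
  shows "(\<forall>(I::real set) (\<gamma>::real \<Rightarrow> real^3).
            is_interval I \<and> \<gamma> ` I \<subseteq> U
            \<and> (\<forall>t\<in>I. (\<gamma> has_vector_derivative e2 (\<gamma> t)) (at t within I))
            \<longrightarrow> (\<forall>s\<in>I. \<forall>t\<in>I. u (\<gamma> s) / (lam (\<gamma> s))^2 = u (\<gamma> t) / (lam (\<gamma> t))^2))
       \<and> (\<forall>p\<in>U. laplace_beltrami f u p = 0 \<and> laplace_beltrami f v p = 0)"
proof -
  interpret M: minimal_hypersurface_frame f N lam e1 e2 e3 U
    by unfold_locales (use assms in auto)
  have u: "\<And>q. q \<in> U \<Longrightarrow> u q = M.u q" using M.ginner_covd_frame unfolding u_def by simp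
  have v: "\<And>q. q \<in> U \<Longrightarrow> v q = M.v q" using M.dird_ln_lam unfolding v_def by simp
  show ?thesis
  proof (intro conjI allI impI ballI)
    fix I \<gamma> s t
    assume curve: "is_interval I \<and> \<gamma> ` I \<subseteq> U \<and> (\<forall>t\<in>I. (\<gamma> has_vector_derivative e2 (\<gamma> t)) (at t within I))"
      and "s \<in> I" "t \<in> I"
    then have "M.u (\<gamma> s) / (lam (\<gamma> s))\<^sup>2 = M.u (\<gamma> t) / (lam (\<gamma> t))\<^sup>2"
      using constant_along_integral_curve[of I \<gamma> U e2 "\<lambda>q. M.u q / (lam q)\<^sup>2"] M.u_over_lam_sq_along_e2
      by blast
    moreover have "\<gamma> s \<in> U" "\<gamma> t \<in> U" using curve \<open>s \<in> I\<close> \<open>t \<in> I\<close> by auto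
    ultimately show "u (\<gamma> s) / (lam (\<gamma> s))\<^sup>2 = u (\<gamma> t) / (lam (\<gamma> t))\<^sup>2"
      by (simp add: u)
  next
    fix p assume p: "p \<in> U"
    have "laplace_beltrami f u p = laplace_beltrami f M.u p"
      by (rule laplace_beltrami_cong_open[OF assms(1) p]) (rule u)
    then show "laplace_beltrami f u p = 0" using M.laplace_u[OF p] by simp
    have "laplace_beltrami f v p = laplace_beltrami f M.v p"
      by (rule laplace_beltrami_cong_open[OF assms(1) p]) (rule v)
    then show "laplace_beltrami f v p = 0" using M.laplace_v[OF p] by simp
  qed
qed

end
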